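(* Let $P$ and $Q$ be unital associative algebras over a field $k$ and let $\varphi\colon Q\to P$ be a morphism of unital algebras. Let $Z:=P\oplus Q$ be the mapping cylinder algebra (defined in the context), let $X$ be a right $P$-module and $Y$ a left $P$-module. Then for every $P$-bimodule $M$, regarded as a $Z$-bimodule via $(p,q)\cdot m=pm+\varphi(q)m$ and $m\cdot(p,q)=mp+m\varphi(q)$, one has $H_n(Z,M)\cong H_n(P,M)$ for all $n\geq 0$, where $H_*$ denotes Hochschild homology.
   Context: All algebras are unital associative $k$-algebras and tensor products are over $k$. The mapping cylinder algebra of $\varphi\colon Q\to P$ is the vector space $Z=P\oplus Q$ with multiplication $(p,q)\cdot(p',q')=(pp'+p\varphi(q')+\varphi(q)p',\,qq')$ and unit $(0,1)$. $H_n(A,M)$ denotes the Hochschild homology of an algebra $A$ with coefficients in an $A$-bimodule $M$. *)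

theory Defs
  imports Main "HOL.Vector_Spaces" "HOL-Library.Product_Plus"
begin

definition k_algebra ::
  "('k::field \<Rightarrow> 'a::ab_group_add \<Rightarrow> 'a) \<Rightarrow> ('a \<Rightarrow> 'a \<Rightarrow> 'a) \<Rightarrow> 'a \<Rightarrow> bool" where
  "k_algebra sm mul one \<longleftrightarrow>
     vector_space sm \<and>
     (\<forall>x y z. mul (mul x y) z = mul x (mul y z)) \<and>
     (\<forall>x. mul one x = x \<and> mul x one = x) \<and>
     (\<forall>x y z. mul x (y + z) = mul x y + mul x z \<and> mul (x + y) z = mul x z + mul y z) \<and>
     (\<forall>c x y. mul (sm c x) y = sm c (mul x y) \<and> mul x (sm c y) = sm c (mul x y))"

definition alg_hom ::
  "('k::field \<Rightarrow> 'q::ab_group_add \<Rightarrow> 'q) \<Rightarrow> ('q \<Rightarrow> 'q \<Rightarrow> 'q) \<Rightarrow> 'q \<Rightarrow>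
   ('k \<Rightarrow> 'p::ab_group_add \<Rightarrow> 'p) \<Rightarrow> ('p \<Rightarrow> 'p \<Rightarrow> 'p) \<Rightarrow> 'p \<Rightarrow> ('q \<Rightarrow> 'p) \<Rightarrow> bool" where
  "alg_hom smQ mulQ oneQ smP mulP oneP f \<longleftrightarrow>
     (\<forall>x y. f (x + y) = f x + f y) \<and>
     (\<forall>c x. f (smQ c x) = smP c (f x)) \<and>
     (\<forall>x y. f (mulQ x y) = mulP (f x) (f y)) \<and>
     f oneQ = oneP"

definition k_bimodule ::
  "('k::field \<Rightarrow> 'a::ab_group_add \<Rightarrow> 'a) \<Rightarrow> ('a \<Rightarrow> 'a \<Rightarrow> 'a) \<Rightarrow> 'a \<Rightarrow>
   ('k \<Rightarrow> 'm::ab_group_add \<Rightarrow> 'm) \<Rightarrow> ('a \<Rightarrow> 'm \<Rightarrow> 'm) \<Rightarrow> ('m \<Rightarrow> 'a \<Rightarrow> 'm) \<Rightarrow> bool" where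
  "k_bimodule smA mulA oneA smM l r \<longleftrightarrow>
     vector_space smM \<and>
     (\<forall>a b m. l (a + b) m = l a m + l b m) \<and> (\<forall>a m n. l a (m + n) = l a m + l a n) \<and>
     (\<forall>a b m. r m (a + b) = r m a + r m b) \<and> (\<forall>a m n. r (m + n) a = r m a + r n a) \<and>
     (\<forall>a b m. l (mulA a b) m = l a (l b m)) \<and> (\<forall>m. l oneA m = m) \<and>
     (\<forall>a b m. r m (mulA a b) = r (r m a) b) \<and> (\<forall>m. r m oneA = m) \<and>
     (\<forall>a b m. l a (r m b) = r (l a m) b) \<and>
     (\<forall>c a m. l (smA c a) m = smM c (l a m) \<and> l a (smM c m) = smM c (l a m)) \<and>
     (\<forall>c a m. r m (smA c a) = smM c (r m a) \<and> r (smM c m) a = smM c (r m a))"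

definition cyl_mul ::
  "('q \<Rightarrow> 'p::ab_group_add) \<Rightarrow> ('p \<Rightarrow> 'p \<Rightarrow> 'p) \<Rightarrow> ('q \<Rightarrow> 'q \<Rightarrow> 'q) \<Rightarrow> 'p \<times> 'q \<Rightarrow> 'p \<times> 'q \<Rightarrow> 'p \<times> 'q" where
  "cyl_mul phi mulP mulQ z z' =
     (case z of (p, q) \<Rightarrow> case z' of (p', q') \<Rightarrow>
        (mulP p p' + mulP p (phi q') + mulP (phi q) p', mulQ q q'))"

definition cyl_one :: "'q \<Rightarrow> 'p::zero \<times> 'q" where
  "cyl_one oneQ = (0, oneQ)"

definition cyl_smul :: "('k \<Rightarrow> 'p \<Rightarrow> 'p) \<Rightarrow> ('k \<Rightarrow> 'q \<Rightarrow> 'q) \<Rightarrow> 'k \<Rightarrow> 'p \<times> 'q \<Rightarrow> 'p \<times> 'q" where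
  "cyl_smul smP smQ c z = (case z of (p, q) \<Rightarrow> (smP c p, smQ c q))"

definition cyl_lact :: "('q \<Rightarrow> 'p) \<Rightarrow> ('p \<Rightarrow> 'm::plus \<Rightarrow> 'm) \<Rightarrow> 'p \<times> 'q \<Rightarrow> 'm \<Rightarrow> 'm" where
  "cyl_lact phi l z m = (case z of (p, q) \<Rightarrow> l p m + l (phi q) m)"

definition cyl_ract :: "('q \<Rightarrow> 'p) \<Rightarrow> ('m::plus \<Rightarrow> 'p \<Rightarrow> 'm) \<Rightarrow> 'm \<Rightarrow> 'p \<times> 'q \<Rightarrow> 'm" where
  "cyl_ract phi r m z = (case z of (p, q) \<Rightarrow> r m p + r m (phi q))"

text \<open>Free k-vector space on pairs (m, [a1,...,an]) = finitely supported functions;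
  the tensor product M \<otimes> A^{\<otimes> n} is its quotient by the k-span of the multilinearity relations.\<close>

definition gen :: "'x \<Rightarrow> 'x \<Rightarrow> 'k::zero_neq_one" where
  "gen t = (\<lambda>s. if s = t then 1 else 0)"

inductive_set kspan :: "('x \<Rightarrow> 'k::field) set \<Rightarrow> ('x \<Rightarrow> 'k) set" for G where
  kspan_zero: "(\<lambda>s. 0) \<in> kspan G"
| kspan_step: "g \<in> G \<Longrightarrow> v \<in> kspan G \<Longrightarrow> (\<lambda>s. c * g s + v s) \<in> kspan G"

definition hchains :: "nat \<Rightarrow> ('m \<times> 'a list \<Rightarrow> 'k::zero) set" where
  "hchains n = {f. finite {t. f t \<noteq> 0} \<and> (\<forall>m as. f (m, as) \<noteq> 0 \<longrightarrow> length as = n)}"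

definition hrelgens ::
  "('k::field \<Rightarrow> 'a::ab_group_add \<Rightarrow> 'a) \<Rightarrow> ('k \<Rightarrow> 'm::ab_group_add \<Rightarrow> 'm) \<Rightarrow> nat \<Rightarrow>
   ('m \<times> 'a list \<Rightarrow> 'k) set" where
  "hrelgens smA smM n =
     {g. \<exists>m m' as. length as = n \<and>
          g = (\<lambda>s. gen (m + m', as) s - gen (m, as) s - gen (m', as) s)} \<union>
     {g. \<exists>c m as. length as = n \<and>
          g = (\<lambda>s. gen (smM c m, as) s - c * gen (m, as) s)} \<union>
     {g. \<exists>m as i x y. length as = n \<and> i < n \<and>
          g = (\<lambda>s. gen (m, as[i := x + y]) s - gen (m, as[i := x]) s - gen (m, as[i := y]) s)} \<union>
     {g. \<exists>m as i c x. length as = n \<and> i < n \<and>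
          g = (\<lambda>s. gen (m, as[i := smA c x]) s - c * gen (m, as[i := x]) s)}"

definition hbgen ::
  "('a \<Rightarrow> 'a \<Rightarrow> 'a) \<Rightarrow> ('a \<Rightarrow> 'm \<Rightarrow> 'm) \<Rightarrow> ('m \<Rightarrow> 'a \<Rightarrow> 'm) \<Rightarrow> 'm \<times> 'a list \<Rightarrow>
   'm \<times> 'a list \<Rightarrow> 'k::field" where
  "hbgen mulA l r t = (case t of (m, as) \<Rightarrow>
     (if length as = 0 then (\<lambda>s. 0) else
      (\<lambda>s. gen (r m (hd as), tl as) s
         + (\<Sum>i\<in>{1..<length as}. (-1) ^ i *
              gen (m, take (i - 1) as @ [mulA (as ! (i - 1)) (as ! i)] @ drop (i + 1) as) s)
         + (-1) ^ length as * gen (l (last as) m, butlast as) s)))"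

definition hbd ::
  "('a \<Rightarrow> 'a \<Rightarrow> 'a) \<Rightarrow> ('a \<Rightarrow> 'm \<Rightarrow> 'm) \<Rightarrow> ('m \<Rightarrow> 'a \<Rightarrow> 'm) \<Rightarrow>
   ('m \<times> 'a list \<Rightarrow> 'k::field) \<Rightarrow> 'm \<times> 'a list \<Rightarrow> 'k" where
  "hbd mulA l r f = (\<lambda>s. \<Sum>t\<in>{t. f t \<noteq> 0}. f t * hbgen mulA l r t s)"

text \<open>Cycles and boundaries, lifted to the free space: x is a cycle iff b x \<in> relations,
  boundaries = relations + image of b. Their quotient is H_n(A, M).\<close>
definition hcycles ::
  "('k::field \<Rightarrow> 'a::ab_group_add \<Rightarrow> 'a) \<Rightarrow> ('a \<Rightarrow> 'a \<Rightarrow> 'a) \<Rightarrow> ('k \<Rightarrow> 'm::ab_group_add \<Rightarrow> 'm) \<Rightarrow>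
   ('a \<Rightarrow> 'm \<Rightarrow> 'm) \<Rightarrow> ('m \<Rightarrow> 'a \<Rightarrow> 'm) \<Rightarrow> nat \<Rightarrow> ('m \<times> 'a list \<Rightarrow> 'k) set" where
  "hcycles smA mulA smM l r n =
     {x \<in> hchains n. hbd mulA l r x \<in> kspan (hrelgens smA smM (n - 1))}"

definition hboundaries ::
  "('k::field \<Rightarrow> 'a::ab_group_add \<Rightarrow> 'a) \<Rightarrow> ('a \<Rightarrow> 'a \<Rightarrow> 'a) \<Rightarrow> ('k \<Rightarrow> 'm::ab_group_add \<Rightarrow> 'm) \<Rightarrow>
   ('a \<Rightarrow> 'm \<Rightarrow> 'm) \<Rightarrow> ('m \<Rightarrow> 'a \<Rightarrow> 'm) \<Rightarrow> nat \<Rightarrow> ('m \<times> 'a list \<Rightarrow> 'k) set" where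
  "hboundaries smA mulA smM l r n =
     {(\<lambda>s. u s + hbd mulA l r y s) | u y.
        u \<in> kspan (hrelgens smA smM n) \<and> y \<in> hchains (Suc n)}"

definition coset :: "('x \<Rightarrow> 'k::plus) set \<Rightarrow> ('x \<Rightarrow> 'k) \<Rightarrow> ('x \<Rightarrow> 'k) set" where
  "coset B x = {(\<lambda>s. x s + b s) | b. b \<in> B}"

definition hochschild_homology ::
  "('k::field \<Rightarrow> 'a::ab_group_add \<Rightarrow> 'a) \<Rightarrow> ('a \<Rightarrow> 'a \<Rightarrow> 'a) \<Rightarrow> ('k \<Rightarrow> 'm::ab_group_add \<Rightarrow> 'm) \<Rightarrow>
   ('a \<Rightarrow> 'm \<Rightarrow> 'm) \<Rightarrow> ('m \<Rightarrow> 'a \<Rightarrow> 'm) \<Rightarrow> nat \<Rightarrow> ('m \<times> 'a list \<Rightarrow> 'k) set set" where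
  "hochschild_homology smA mulA smM l r n =
     (coset (hboundaries smA mulA smM l r n)) ` (hcycles smA mulA smM l r n)"

text \<open>k-linear isomorphism between H_n(A,M) and H_n(A',M'): a bijection of the sets of cosets
  compatible with the induced vector space operations (c[x] + [y] = [c x + y]).\<close>
definition hochschild_iso ::
  "('k::field \<Rightarrow> 'a::ab_group_add \<Rightarrow> 'a) \<Rightarrow> ('a \<Rightarrow> 'a \<Rightarrow> 'a) \<Rightarrow> ('k \<Rightarrow> 'm::ab_group_add \<Rightarrow> 'm) \<Rightarrow>
   ('a \<Rightarrow> 'm \<Rightarrow> 'm) \<Rightarrow> ('m \<Rightarrow> 'a \<Rightarrow> 'm) \<Rightarrow>
   ('k \<Rightarrow> 'b::ab_group_add \<Rightarrow> 'b) \<Rightarrow> ('b \<Rightarrow> 'b \<Rightarrow> 'b) \<Rightarrow> ('k \<Rightarrow> 'n::ab_group_add \<Rightarrow> 'n) \<Rightarrow>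
   ('b \<Rightarrow> 'n \<Rightarrow> 'n) \<Rightarrow> ('n \<Rightarrow> 'b \<Rightarrow> 'n) \<Rightarrow> nat \<Rightarrow> bool" where
  "hochschild_iso smA mulA smM l r smB mulB smN l' r' n \<longleftrightarrow>
     (\<exists>F. bij_betw F (hochschild_homology smA mulA smM l r n)
                    (hochschild_homology smB mulB smN l' r' n) \<and>
        (\<forall>x \<in> hcycles smA mulA smM l r n. \<forall>y \<in> hcycles smA mulA smM l r n. \<forall>c.
           F (coset (hboundaries smA mulA smM l r n) (\<lambda>s. c * x s + y s)) =
           {(\<lambda>s. c * u s + v s) | u v.
              u \<in> F (coset (hboundaries smA mulA smM l r n) x) \<and>
              v \<in> F (coset (hboundaries smA mulA smM l r n) y)}))"

end

theory Submission
  imports Defs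
begin

text \<open>
  The projection \<open>\<pi>(p, q) = p + \<phi>(q)\<close> is an algebra map \<open>Z \<rightarrow> P\<close>, split by the
  algebra map \<open>j(p) = (p, 0)\<close>, and \<open>Z\<close> acts on \<open>M\<close> through \<open>\<pi>\<close>. Hence \<open>\<pi>\<^sub>* j\<^sub>* = id\<close> on the
  Hochschild complex, and it remains to show that \<open>j\<^sub>* \<pi>\<^sub>* = e\<^sub>*\<close>, with \<open>e = j \<circ> \<pi>\<close>, is
  homotopic to the identity. The element \<open>E = (1, 0)\<close> satisfies \<open>E z = e(z) = e(z) E\<close> and acts
  trivially on \<open>M\<close>, so the operator inserting \<open>E\<close> in position \<open>j\<close> (and applying \<open>e\<close> to the
  entries before it), summed with signs \<open>(-1)\<^sup>j\<close>, is a chain homotopy between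
  \<open>id\<close> and \<open>e\<^sub>*\<close>: the simplicial identities make all mixed terms cancel except
  \<open>d\<^sub>0 s\<^sub>0 = id\<close> and \<open>d\<^bsub>n+1\<^esub> s\<^sub>n = e\<^sub>*\<close>. All maps involved are defined on the free vector space
  of generators and preserve the multilinearity relations, so they descend to the tensor
  products over which homology is computed.
\<close>

abbreviation finite_support :: "('x \<Rightarrow> 'k::zero) \<Rightarrow> bool" where
  "finite_support f \<equiv> finite {t. f t \<noteq> 0}"

definition lin_ext :: "('x \<Rightarrow> 'y \<Rightarrow> 'k::field) \<Rightarrow> ('x \<Rightarrow> 'k) \<Rightarrow> 'y \<Rightarrow> 'k" where
  "lin_ext G f = (\<lambda>s. \<Sum>t\<in>{t. f t \<noteq> 0}. f t * G t s)"

lemma lin_ext_eq_sum: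
  assumes "finite S" "{t. f t \<noteq> 0} \<subseteq> S"
  shows "lin_ext G f s = (\<Sum>t\<in>S. f t * G t s)"
  unfolding lin_ext_def by (rule sum.mono_neutral_left[OF assms]) auto

lemma lin_ext_cong: "(\<And>t. f t \<noteq> 0 \<Longrightarrow> G t = G' t) \<Longrightarrow> lin_ext G f = lin_ext G' f"
  unfolding lin_ext_def by (intro ext sum.cong) auto

lemma finite_support_lincomb:
  "finite_support f \<Longrightarrow> finite_support g \<Longrightarrow> finite_support (\<lambda>s. c * f s + (g s :: 'k::field))"
  by (rule finite_subset[of _ "{t. f t \<noteq> 0} \<union> {t. g t \<noteq> 0}"]) auto

lemma finite_support_gen: "finite_support (gen t :: _ \<Rightarrow> 'k::zero_neq_one)"
  by (rule finite_subset[of _ "{t}"]) (auto simp: gen_def)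

lemma lin_ext_lincomb:
  assumes "finite_support f" "finite_support g"
  shows "lin_ext G (\<lambda>s. c * f s + g s) = (\<lambda>s'. c * lin_ext G f s' + lin_ext G g s')"
proof
  fix s'
  let ?S = "{t. f t \<noteq> 0} \<union> {t. g t \<noteq> 0}"
  have S: "finite ?S" using assms by auto
  have "lin_ext G (\<lambda>s. c * f s + g s) s' = (\<Sum>t\<in>?S. (c * f t + g t) * G t s')"
    by (rule lin_ext_eq_sum[OF S]) auto
  also have "\<dots> = c * (\<Sum>t\<in>?S. f t * G t s') + (\<Sum>t\<in>?S. g t * G t s')"
    by (simp add: distrib_right sum.distrib sum_distrib_left mult.assoc)
  also have "\<dots> = c * lin_ext G f s' + lin_ext G g s'"
    by (simp add: lin_ext_eq_sum[OF S])
  finally show "lin_ext G (\<lambda>s. c * f s + g s) s' = c * lin_ext G f s' + lin_ext G g s'" .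
qed

lemma lin_ext_zero: "lin_ext G (\<lambda>s. 0) = (\<lambda>s. 0)"
  by (simp add: lin_ext_def)

lemma lin_ext_gen: "lin_ext G (gen t) = G t"
proof
  fix s show "lin_ext G (gen t) s = G t s"
    by (subst lin_ext_eq_sum[of "{t}"]) (auto simp: gen_def)
qed

lemma lin_ext_diff:
  assumes "finite_support f" "finite_support g"
  shows "lin_ext G (\<lambda>s. f s - g s) = (\<lambda>s. lin_ext G f s - lin_ext G g s)"
  using lin_ext_lincomb[OF assms(2,1), of G "-1"] by simp

lemma lin_ext_scale:
  assumes "finite_support f"
  shows "lin_ext G (\<lambda>s. c * f s) = (\<lambda>s. c * lin_ext G f s)"
  using lin_ext_lincomb[OF assms, of "\<lambda>s. 0" G c] by (simp add: lin_ext_zero)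

lemma lin_ext_gen_diff_scale:
  "lin_ext G (\<lambda>s. gen a s - c * gen b s) = (\<lambda>s. G a s - c * G b s)"
  by (simp add: lin_ext_diff lin_ext_scale lin_ext_gen finite_support_gen
      finite_support_lincomb[OF finite_support_gen, of _ c "\<lambda>s. 0", simplified])

lemma lin_ext_gen_diff_diff:
  "lin_ext G (\<lambda>s. gen a s - gen b s - gen c s) = (\<lambda>s. G a s - G b s - G c s)"
proof -
  have ab: "finite_support (\<lambda>s. gen a s - gen b s :: 'k::field)"
    using finite_support_lincomb[OF finite_support_gen[of b] finite_support_gen[of a], of "-1"]
    by simp
  have "lin_ext G (\<lambda>s. gen a s - gen b s - gen c s)
      = (\<lambda>s. lin_ext G (\<lambda>s. gen a s - gen b s) s - lin_ext G (gen c) s)"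
    by (rule lin_ext_diff[OF ab finite_support_gen])
  also have "lin_ext G (\<lambda>s. gen a s - gen b s) = (\<lambda>s. lin_ext G (gen a) s - lin_ext G (gen b) s)"
    by (rule lin_ext_diff[OF finite_support_gen finite_support_gen])
  finally show ?thesis by (simp add: lin_ext_gen)
qed

lemma lin_ext_nonzero_imp:
  assumes "lin_ext G f s \<noteq> 0"
  shows "\<exists>t. f t \<noteq> 0 \<and> G t s \<noteq> 0"
proof -
  obtain t where "t \<in> {t. f t \<noteq> 0}" "f t * G t s \<noteq> 0"
    using assms unfolding lin_ext_def by (rule sum.not_neutral_contains_not_neutral)
  then show ?thesis by auto
qed

lemma finite_support_lin_ext:
  assumes "finite_support f" "\<And>t. finite_support (G t)"
  shows "finite_support (lin_ext G f)"
proof (rule finite_subset)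
  show "{s. lin_ext G f s \<noteq> 0} \<subseteq> (\<Union>t\<in>{t. f t \<noteq> 0}. {s. G t s \<noteq> 0})"
    using lin_ext_nonzero_imp by fastforce
  show "finite (\<Union>t\<in>{t. f t \<noteq> 0}. {s. G t s \<noteq> 0})" using assms by auto
qed

lemma finite_support_induct[consumes 1, case_names zero step]:
  fixes f :: "'x \<Rightarrow> 'k::field"
  assumes "finite_support f" "P (\<lambda>s. 0)"
    and "\<And>f c t. finite_support f \<Longrightarrow> P f \<Longrightarrow> P (\<lambda>s. c * gen t s + f s)"
  shows "P f"
proof -
  have "P f" if "finite S" "{t. f t \<noteq> 0} = S" for S and f :: "'x \<Rightarrow> 'k"
    using that
  proof (induction S arbitrary: f rule: finite_induct)
    case empty
    then have "f = (\<lambda>s. 0)" by (auto simp: fun_eq_iff)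
    then show ?case using assms(2) by simp
  next
    case (insert t S)
    let ?f' = "f(t := 0)"
    have S: "{s. ?f' s \<noteq> 0} = S" using insert by auto
    have "f = (\<lambda>s. f t * gen t s + ?f' s)" by (auto simp: gen_def)
    then show ?case using assms(3)[of ?f' "f t" t] insert.IH[OF S] insert.hyps(1) S by simp
  qed
  then show ?thesis using assms(1) by blast
qed

lemma lin_ext_lin_ext:
  assumes "finite_support f" "\<And>t. finite_support (G' t)"
  shows "lin_ext G (lin_ext G' f) = lin_ext (\<lambda>t. lin_ext G (G' t)) f"
  using assms(1)
proof (induction f rule: finite_support_induct)
  case zero then show ?case by (simp add: lin_ext_zero)
next
  case (step f c t)
  then show ?case
    using assms(2) by (simp add: lin_ext_lincomb finite_support_gen finite_support_lin_ext lin_ext_gen)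
qed

lemma lin_ext_sum:
  assumes "finite I" "\<And>i. i \<in> I \<Longrightarrow> finite_support (v i)"
  shows "lin_ext G (\<lambda>s. \<Sum>i\<in>I. c i * v i s) = (\<lambda>s. \<Sum>i\<in>I. c i * lin_ext G (v i) s)"
  using assms
proof (induction I rule: finite_induct)
  case empty then show ?case by (simp add: lin_ext_zero)
next
  case (insert i I)
  have "finite_support (\<lambda>s. \<Sum>i\<in>I. c i * v i s)"
  proof (rule finite_subset)
    show "{s. (\<Sum>i\<in>I. c i * v i s) \<noteq> 0} \<subseteq> (\<Union>i\<in>I. {s. v i s \<noteq> 0})"
    proof
      fix s assume "s \<in> {s. (\<Sum>i\<in>I. c i * v i s) \<noteq> 0}"
      then obtain i where "i \<in> I" "c i * v i s \<noteq> 0"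
        by (auto elim: sum.not_neutral_contains_not_neutral)
      then show "s \<in> (\<Union>i\<in>I. {s. v i s \<noteq> 0})" by auto
    qed
    show "finite (\<Union>i\<in>I. {s. v i s \<noteq> 0})" using insert by simp
  qed
  then show ?case using insert by (simp add: lin_ext_lincomb)
qed

lemma lin_ext_sum_maps:
  assumes "finite J"
  shows "lin_ext (\<lambda>t s. \<Sum>j\<in>J. c j * G j t s) u = (\<lambda>s. \<Sum>j\<in>J. c j * lin_ext (G j) u s)"
  unfolding lin_ext_def
  by (simp add: sum_distrib_left mult.left_commute sum.swap[of _ J])

lemma lin_ext_gen_id: "finite_support f \<Longrightarrow> lin_ext gen f = f"
  by (induction f rule: finite_support_induct)
    (simp_all add: lin_ext_zero lin_ext_lincomb finite_support_gen lin_ext_gen)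

lemma kspan_lincomb: "u \<in> kspan G \<Longrightarrow> v \<in> kspan G \<Longrightarrow> (\<lambda>s. c * u s + v s) \<in> kspan G"
proof (induction u rule: kspan.induct)
  case kspan_zero then show ?case by simp
next
  case (kspan_step g u d)
  have "(\<lambda>s. c * (d * g s + u s) + v s) = (\<lambda>s. (c * d) * g s + (c * u s + v s))"
    by (simp add: algebra_simps)
  then show ?case using kspan_step by (simp add: kspan.kspan_step)
qed

lemma kspan_base: "g \<in> G \<Longrightarrow> g \<in> kspan G"
  using kspan.kspan_step[OF _ kspan.kspan_zero, of g G 1] by simp

lemma kspan_sum:
  "finite I \<Longrightarrow> (\<And>i. i \<in> I \<Longrightarrow> u i \<in> kspan G) \<Longrightarrow> (\<lambda>s. \<Sum>i\<in>I. c i * u i s) \<in> kspan G"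
  by (induction I rule: finite_induct) (simp_all add: kspan.kspan_zero kspan_lincomb)

lemma kspan_finite_support:
  assumes "\<And>g. g \<in> S \<Longrightarrow> finite_support g" "u \<in> kspan S"
  shows "finite_support u"
  using assms(2) by (induction u rule: kspan.induct) (auto intro: finite_support_lincomb assms(1))

lemma lin_ext_kspan:
  assumes "u \<in> kspan S" "\<And>g. g \<in> S \<Longrightarrow> finite_support g"
    and "\<And>g. g \<in> S \<Longrightarrow> lin_ext G g \<in> kspan S'"
  shows "lin_ext G u \<in> kspan S'"
  using assms(1)
proof (induction u rule: kspan.induct)
  case kspan_zero then show ?case by (simp add: lin_ext_zero kspan.kspan_zero)
next
  case (kspan_step g v c)
  have "finite_support v" using kspan_step(2) assms(2) kspan_finite_support by blast
  then show ?case using kspan_step assms by (simp add: lin_ext_lincomb kspan_lincomb)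
qed

lemma hchains_finite_support: "x \<in> hchains n \<Longrightarrow> finite_support x"
  by (simp add: hchains_def)

lemma hchains_zero: "(\<lambda>s. 0) \<in> hchains n"
  by (simp add: hchains_def)

lemma hchains_gen: "length as = n \<Longrightarrow> gen (m, as) \<in> hchains n"
  by (auto simp: hchains_def finite_support_gen gen_def)

lemma hchains_lincomb:
  fixes x y :: "_ \<Rightarrow> 'k::field"
  assumes "x \<in> hchains n" "y \<in> hchains n"
  shows "(\<lambda>s. c * x s + y s) \<in> hchains n"
  unfolding hchains_def
proof (intro CollectI conjI allI impI)
  show "finite_support (\<lambda>s. c * x s + y s)"
    using assms by (intro finite_support_lincomb) (auto simp: hchains_def)
  fix m as assume "c * x (m, as) + y (m, as) \<noteq> 0"
  then have "x (m, as) \<noteq> 0 \<or> y (m, as) \<noteq> 0" by auto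
  then show "length as = n" using assms unfolding hchains_def by blast
qed

lemma hchains_diff:
  "x \<in> hchains n \<Longrightarrow> y \<in> hchains n \<Longrightarrow> (\<lambda>s. x s - y s :: 'k::field) \<in> hchains n"
  using hchains_lincomb[of y n x "-1"] by simp

lemma hchains_scale: "x \<in> hchains n \<Longrightarrow> (\<lambda>s. c * x s :: 'k::field) \<in> hchains n"
  using hchains_lincomb[OF _ hchains_zero, of x n c] by simp

lemma hchains_sum:
  "finite I \<Longrightarrow> (\<And>i. i \<in> I \<Longrightarrow> v i \<in> hchains n) \<Longrightarrow>
    (\<lambda>s. \<Sum>i\<in>I. c i * v i s :: 'k::field) \<in> hchains n"
  by (induction I rule: finite_induct) (simp_all add: hchains_zero hchains_lincomb)

lemma lin_ext_hchains:
  assumes "f \<in> hchains n" "\<And>t. finite_support (G t)"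
    and "\<And>m as. length as = n \<Longrightarrow> G (m, as) \<in> hchains n'"
  shows "lin_ext G f \<in> hchains n'"
  unfolding hchains_def
proof (intro CollectI conjI allI impI)
  show "finite_support (lin_ext G f)"
    by (rule finite_support_lin_ext[OF hchains_finite_support[OF assms(1)] assms(2)])
  fix m as assume "lin_ext G f (m, as) \<noteq> 0"
  then obtain m' bs where "f (m', bs) \<noteq> 0" "G (m', bs) (m, as) \<noteq> 0"
    using lin_ext_nonzero_imp by fastforce
  moreover from \<open>f (m', bs) \<noteq> 0\<close> have "length bs = n"
    using assms(1) unfolding hchains_def by blast
  ultimately show "length as = n'" using assms(3) unfolding hchains_def by blast
qed

lemma hrelgens_hchains: "g \<in> hrelgens smA smM n \<Longrightarrow> g \<in> hchains n"
  unfolding hrelgens_def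
  by (elim UnE CollectE exE conjE) (simp_all add: hchains_gen hchains_diff hchains_scale)

lemma kspan_hrelgens_hchains: "u \<in> kspan (hrelgens smA smM n) \<Longrightarrow> u \<in> hchains n"
  by (induction u rule: kspan.induct) (auto intro: hchains_zero hchains_lincomb hrelgens_hchains)

definition relabel :: "('x \<Rightarrow> 'y) \<Rightarrow> ('x \<Rightarrow> 'k::field) \<Rightarrow> 'y \<Rightarrow> 'k" where
  "relabel \<sigma> = lin_ext (\<lambda>t. gen (\<sigma> t))"

abbreviation chain_map :: "('a \<Rightarrow> 'b) \<Rightarrow> ('m \<times> 'a list \<Rightarrow> 'k::field) \<Rightarrow> 'm \<times> 'b list \<Rightarrow> 'k" where
  "chain_map f \<equiv> relabel (apsnd (map f))"

lemma relabel_gen: "relabel \<sigma> (gen t) = gen (\<sigma> t)"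
  by (simp add: relabel_def lin_ext_gen)

lemma relabel_zero: "relabel \<sigma> (\<lambda>s. 0) = (\<lambda>s. 0)"
  by (simp add: relabel_def lin_ext_zero)

lemma finite_support_relabel: "finite_support x \<Longrightarrow> finite_support (relabel \<sigma> x)"
  unfolding relabel_def by (rule finite_support_lin_ext) (simp_all add: finite_support_gen)

lemma relabel_lincomb:
  "finite_support x \<Longrightarrow> finite_support y \<Longrightarrow>
    relabel \<sigma> (\<lambda>s. c * x s + y s) = (\<lambda>s. c * relabel \<sigma> x s + relabel \<sigma> y s)"
  unfolding relabel_def by (rule lin_ext_lincomb)

lemma relabel_relabel: "finite_support x \<Longrightarrow> relabel \<tau> (relabel \<sigma> x) = relabel (\<tau> \<circ> \<sigma>) x"
  unfolding relabel_def by (subst lin_ext_lin_ext) (simp_all add: finite_support_gen lin_ext_gen)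

lemma relabel_id: "finite_support x \<Longrightarrow> relabel id x = x"
  by (simp add: relabel_def lin_ext_gen_id)

lemma relabel_hchains:
  assumes "x \<in> hchains n" "\<And>as. length as = n \<Longrightarrow> length (\<rho> as) = n'"
  shows "relabel (apsnd \<rho>) x \<in> hchains n'"
  unfolding relabel_def
  by (rule lin_ext_hchains[OF assms(1)]) (simp_all add: finite_support_gen hchains_gen assms(2))

lemma chain_map_hchains: "x \<in> hchains n \<Longrightarrow> chain_map f x \<in> hchains n"
  by (rule relabel_hchains) simp_all

definition slotwise_linear ::
  "('k \<Rightarrow> 'a::ab_group_add \<Rightarrow> 'a) \<Rightarrow> ('k \<Rightarrow> 'b::ab_group_add \<Rightarrow> 'b) \<Rightarrow> nat \<Rightarrow> nat \<Rightarrow>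
   ('a list \<Rightarrow> 'b list) \<Rightarrow> bool" where
  "slotwise_linear smA smB k k' \<rho> \<longleftrightarrow>
     (\<forall>as. length as = k \<longrightarrow> length (\<rho> as) = k') \<and>
     (\<forall>i<k. \<exists>i'<k'. \<exists>h. (\<forall>x y. h (x + y) = h x + h y) \<and> (\<forall>c x. h (smA c x) = smB c (h x)) \<and>
        (\<forall>as v. length as = k \<longrightarrow> \<rho> (as[i := v]) = (\<rho> as)[i' := h v]))"

lemma slotwise_linear_map:
  assumes "\<And>x y. f (x + y) = f x + f y" "\<And>c x. f (smA c x) = smB c (f x)"
  shows "slotwise_linear smA smB k k (map f)"
  unfolding slotwise_linear_def using assms by (auto simp: map_update)

lemma slotwise_linear_length:
  "slotwise_linear smA smB k k' \<rho> \<Longrightarrow> length as = k \<Longrightarrow> length (\<rho> as) = k'"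
  unfolding slotwise_linear_def by blast

lemma slotwise_linearE:
  assumes "slotwise_linear smA smB k k' \<rho>" "i < k"
  obtains i' h where "i' < k'" "\<And>x y. h (x + y) = h x + h y" "\<And>c x. h (smA c x) = smB c (h x)"
    "\<And>as v. length as = k \<Longrightarrow> \<rho> (as[i := v]) = (\<rho> as)[i' := h v]"
proof -
  from assms obtain i' h where "i' < k'" "\<forall>x y. h (x + y) = h x + h y"
    "\<forall>c x. h (smA c x) = smB c (h x)" "\<forall>as v. length as = k \<longrightarrow> \<rho> (as[i := v]) = (\<rho> as)[i' := h v]"
    unfolding slotwise_linear_def by auto
  then show ?thesis by (intro that[of i' h]) blast+
qed

lemma relabel_hrelgens:
  fixes g :: "'m::ab_group_add \<times> 'a::ab_group_add list \<Rightarrow> 'k::field"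
  assumes \<rho>: "slotwise_linear smA smB k k' \<rho>" and g: "g \<in> hrelgens smA smM k"
  shows "relabel (apsnd \<rho>) g \<in> hrelgens smB smM k'"
  using g[unfolded hrelgens_def]
proof (elim UnE CollectE exE conjE)
  fix m m' as assume as: "length as = k"
    and "g = (\<lambda>s. gen (m + m', as) s - gen (m, as) s - gen (m', as) s)"
  then have "relabel (apsnd \<rho>) g = (\<lambda>s. gen (m + m', \<rho> as) s - gen (m, \<rho> as) s - gen (m', \<rho> as) s)"
    by (simp add: relabel_def lin_ext_gen_diff_diff)
  then show ?thesis
    unfolding hrelgens_def using slotwise_linear_length[OF \<rho> as] by blast
next
  fix c m as assume as: "length as = k" and "g = (\<lambda>s. gen (smM c m, as) s - c * gen (m, as) s)"
  then have "relabel (apsnd \<rho>) g = (\<lambda>s. gen (smM c m, \<rho> as) s - c * gen (m, \<rho> as) s)"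
    by (simp add: relabel_def lin_ext_gen_diff_scale)
  then show ?thesis
    unfolding hrelgens_def using slotwise_linear_length[OF \<rho> as] by blast
next
  fix m as i x y assume as: "length as = k" "i < k"
    and g: "g = (\<lambda>s. gen (m, as[i := x + y]) s - gen (m, as[i := x]) s - gen (m, as[i := y]) s)"
  obtain i' h where i': "i' < k'" and h: "\<And>x y. h (x + y) = h x + h y"
    and upd: "\<And>v. \<rho> (as[i := v]) = (\<rho> as)[i' := h v]"
    using slotwise_linearE[OF \<rho> as(2)] as(1) by metis
  have "relabel (apsnd \<rho>) g = (\<lambda>s. gen (m, (\<rho> as)[i' := h x + h y]) s
      - gen (m, (\<rho> as)[i' := h x]) s - gen (m, (\<rho> as)[i' := h y]) s)"
    by (simp add: g relabel_def lin_ext_gen_diff_diff upd h)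
  then show ?thesis
    unfolding hrelgens_def using slotwise_linear_length[OF \<rho> as(1)] i' by blast
next
  fix m as i c x assume as: "length as = k" "i < k"
    and g: "g = (\<lambda>s. gen (m, as[i := smA c x]) s - c * gen (m, as[i := x]) s)"
  obtain i' h where i': "i' < k'" and h: "\<And>c x. h (smA c x) = smB c (h x)"
    and upd: "\<And>v. \<rho> (as[i := v]) = (\<rho> as)[i' := h v]"
    using slotwise_linearE[OF \<rho> as(2)] as(1) by metis
  have "relabel (apsnd \<rho>) g = (\<lambda>s. gen (m, (\<rho> as)[i' := smB c (h x)]) s
      - c * gen (m, (\<rho> as)[i' := h x]) s)"
    by (simp add: g relabel_def lin_ext_gen_diff_scale upd h)
  then show ?thesis
    unfolding hrelgens_def using slotwise_linear_length[OF \<rho> as(1)] i' by blast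
qed

lemma relabel_kspan_hrelgens:
  fixes u :: "'m::ab_group_add \<times> 'a::ab_group_add list \<Rightarrow> 'k::field"
  assumes "slotwise_linear smA smB k k' \<rho>" "u \<in> kspan (hrelgens smA smM k)"
  shows "relabel (apsnd \<rho>) u \<in> kspan (hrelgens smB smM k')"
  unfolding relabel_def
proof (rule lin_ext_kspan[OF assms(2)])
  fix g assume "g \<in> hrelgens smA smM k"
  then show "finite_support g" by (intro hchains_finite_support hrelgens_hchains)
  show "lin_ext (\<lambda>t. gen (apsnd \<rho> t)) g \<in> kspan (hrelgens smB smM k')"
    using relabel_hrelgens[OF assms(1) \<open>g \<in> _\<close>] unfolding relabel_def by (rule kspan_base)
qed

section \<open>Face maps and the Hochschild boundary\<close>

definition face ::
  "('a \<Rightarrow> 'a \<Rightarrow> 'a) \<Rightarrow> ('a \<Rightarrow> 'm \<Rightarrow> 'm) \<Rightarrow> ('m \<Rightarrow> 'a \<Rightarrow> 'm) \<Rightarrow> nat \<Rightarrow>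
   'm \<times> 'a list \<Rightarrow> 'm \<times> 'a list" where
  "face mul l r i t = (case t of (m, as) \<Rightarrow>
     if i = 0 then (r m (hd as), tl as)
     else if i = length as then (l (last as) m, butlast as)
     else (m, take (i - 1) as @ [mul (as ! (i - 1)) (as ! i)] @ drop (i + 1) as))"

lemma face_0_Cons: "face mul l r 0 (m, a # as) = (r m a, as)"
  by (simp add: face_def)

lemma face_snoc: "i = Suc (length as) \<Longrightarrow> face mul l r i (m, as @ [a]) = (l a m, as)"
  by (simp add: face_def)

lemma face_middle:
  "i = Suc (length us) \<Longrightarrow> face mul l r i (m, us @ a # b # vs) = (m, us @ mul a b # vs)"
  by (simp add: face_def nth_append)

lemma length_face:
  "as \<noteq> [] \<Longrightarrow> i \<le> length as \<Longrightarrow> length (snd (face mul l r i (m, as))) = length as - 1"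
  by (auto simp: face_def min_def)

lemma hbgen_Nil: "hbgen mul l r (m, []) = (\<lambda>s. 0)"
  by (simp add: hbgen_def)

lemma hbgen_eq_face_sum:
  assumes "as \<noteq> []"
  shows "hbgen mul l r (m, as) = (\<lambda>s. \<Sum>i\<in>{0..length as}. (-1)^i * gen (face mul l r i (m, as)) s)"
proof
  fix s
  let ?n = "length as" and ?d = "\<lambda>i. gen (face mul l r i (m, as)) s :: 'k::field"
  have "{0..?n} = insert 0 (insert ?n {1..<?n})" using assms by auto
  then have "(\<Sum>i\<in>{0..?n}. (-1)^i * ?d i) = ?d 0 + ((-1)^?n * ?d ?n + (\<Sum>i\<in>{1..<?n}. (-1)^i * ?d i))"
    using assms by simp
  also have "(\<Sum>i\<in>{1..<?n}. (-1)^i * ?d i) = (\<Sum>i\<in>{1..<?n}. (-1) ^ i *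
      gen (m, take (i - 1) as @ [mul (as ! (i - 1)) (as ! i)] @ drop (i + 1) as) s)"
    by (rule sum.cong) (auto simp: face_def)
  also have "?d 0 = gen (r m (hd as), tl as) s" by (simp add: face_def)
  also have "?d ?n = gen (l (last as) m, butlast as) s" using assms by (simp add: face_def)
  finally show "hbgen mul l r (m, as) s = (\<Sum>i\<in>{0..?n}. (-1)^i * ?d i)"
    using assms by (simp add: hbgen_def ac_simps) (erule sym)
qed

lemma hbgen_hchains:
  assumes "length as = Suc n"
  shows "hbgen mul l r (m, as) \<in> hchains n"
proof -
  have ne: "as \<noteq> []" using assms by auto
  show ?thesis unfolding hbgen_eq_face_sum[OF ne]
  proof (rule hchains_sum)
    fix i assume "i \<in> {0..length as}"
    then have "length (snd (face mul l r i (m, as))) = n" using length_face[OF ne, of i] assms by simp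
    then show "gen (face mul l r i (m, as)) \<in> hchains n"
      by (metis hchains_gen prod.collapse)
  qed simp
qed

lemma finite_support_hbgen: "finite_support (hbgen mul l r t :: _ \<Rightarrow> 'k::field)"
proof -
  obtain m as where t: "t = (m, as)" by (cases t)
  show ?thesis
  proof (cases as)
    case Nil then show ?thesis using t by (simp add: hbgen_Nil)
  next
    case (Cons a as')
    then have "hbgen mul l r t \<in> (hchains (length as') :: (_ \<Rightarrow> 'k) set)"
      using t hbgen_hchains[of "a # as'" "length as'"] by simp
    then show ?thesis by (rule hchains_finite_support)
  qed
qed

lemma hbd_eq_lin_ext: "hbd mul l r = lin_ext (hbgen mul l r)"
  by (simp add: hbd_def lin_ext_def fun_eq_iff)

lemma hbd_gen: "hbd mul l r (gen t) = hbgen mul l r t"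
  by (simp add: hbd_eq_lin_ext lin_ext_gen)

lemma hbd_zero: "hbd mul l r (\<lambda>s. 0) = (\<lambda>s. 0)"
  by (simp add: hbd_eq_lin_ext lin_ext_zero)

lemma hbd_lincomb:
  "finite_support x \<Longrightarrow> finite_support y \<Longrightarrow>
    hbd mul l r (\<lambda>s. c * x s + y s) = (\<lambda>s. c * hbd mul l r x s + hbd mul l r y s)"
  unfolding hbd_eq_lin_ext by (rule lin_ext_lincomb)

lemma finite_support_hbd: "finite_support x \<Longrightarrow> finite_support (hbd mul l r x)"
  unfolding hbd_eq_lin_ext by (rule finite_support_lin_ext) (simp_all add: finite_support_hbgen)

lemma hbd_hchains_0:
  assumes "x \<in> hchains 0"
  shows "hbd mul l r x = (\<lambda>s. 0)"
  unfolding hbd_def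
proof (intro ext sum.neutral ballI)
  fix s t assume "t \<in> {t. x t \<noteq> 0}"
  moreover obtain m as where t: "t = (m, as)" by (cases t)
  ultimately have "as = []" using assms by (auto simp: hchains_def)
  then show "x t * hbgen mul l r t s = 0" using t by (simp add: hbgen_Nil)
qed

lemma chain_map_face:
  assumes "\<And>a b. f (mulA a b) = mulB (f a) (f b)"
    and "\<And>m a. rB m (f a) = rA m a" and "\<And>m a. lB (f a) m = lA a m"
    and "as \<noteq> []" "i \<le> length as"
  shows "apsnd (map f) (face mulA lA rA i (m, as)) = face mulB lB rB i (m, map f as)"
  using assms by (auto simp: face_def hd_map last_map map_butlast map_tl take_map drop_map)

lemma chain_map_hbgen:
  assumes "\<And>a b. f (mulA a b) = mulB (f a) (f b)"
    and "\<And>m a. rB m (f a) = rA m a" and "\<And>m a. lB (f a) m = lA a m"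
  shows "chain_map f (hbgen mulA lA rA t) = (hbgen mulB lB rB (apsnd (map f) t) :: _ \<Rightarrow> 'k::field)"
proof -
  obtain m as where t: "t = (m, as)" by (cases t)
  show ?thesis
  proof (cases "as = []")
    case True then show ?thesis using t by (simp add: hbgen_Nil relabel_zero)
  next
    case False
    have "chain_map f (hbgen mulA lA rA (m, as)) =
        (\<lambda>s. \<Sum>i\<in>{0..length as}. (-1)^i * gen (apsnd (map f) (face mulA lA rA i (m, as))) s :: 'k)"
      unfolding hbgen_eq_face_sum[OF False] relabel_def
      by (subst lin_ext_sum) (simp_all add: finite_support_gen lin_ext_gen)
    also have "\<dots> = hbgen mulB lB rB (m, map f as)"
      using False
      by (simp add: hbgen_eq_face_sum chain_map_face[where f = f and mulA = mulA and mulB = mulB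
          and lA = lA and lB = lB and rA = rA and rB = rB, OF assms])
    finally show ?thesis using t by simp
  qed
qed

lemma chain_map_hbd:
  assumes "\<And>a b. f (mulA a b) = mulB (f a) (f b)"
    and "\<And>m a. rB m (f a) = rA m a" and "\<And>m a. lB (f a) m = lA a m"
    and "finite_support x"
  shows "chain_map f (hbd mulA lA rA x) = hbd mulB lB rB (chain_map f x)"
proof -
  have "chain_map f (hbd mulA lA rA x) = lin_ext (\<lambda>t. chain_map f (hbgen mulA lA rA t)) x"
    unfolding hbd_eq_lin_ext relabel_def
    by (rule lin_ext_lin_ext[OF assms(4) finite_support_hbgen])
  also have "\<dots> = lin_ext (\<lambda>t. hbgen mulB lB rB (apsnd (map f) t)) x"
    by (simp add: chain_map_hbgen[where f = f and mulA = mulA and mulB = mulB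
        and lA = lA and lB = lB and rA = rA and rB = rB, OF assms(1-3)])
  also have "\<dots> = hbd mulB lB rB (chain_map f x)"
    unfolding hbd_eq_lin_ext relabel_def
    by (subst lin_ext_lin_ext[OF assms(4) finite_support_gen]) (simp add: lin_ext_gen)
  finally show ?thesis .
qed

definition lin_closed :: "('x \<Rightarrow> 'k::field) set \<Rightarrow> bool" where
  "lin_closed B \<longleftrightarrow> (\<lambda>s. 0) \<in> B \<and> (\<forall>x\<in>B. \<forall>y\<in>B. \<forall>c. (\<lambda>s. c * x s + y s) \<in> B)"

lemma lin_closed_zero: "lin_closed B \<Longrightarrow> (\<lambda>s. 0) \<in> B"
  by (simp add: lin_closed_def)

lemma lin_closed_lincomb: "lin_closed B \<Longrightarrow> x \<in> B \<Longrightarrow> y \<in> B \<Longrightarrow> (\<lambda>s. c * x s + y s) \<in> B"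
  by (simp add: lin_closed_def)

lemma coset_self: "lin_closed B \<Longrightarrow> x \<in> coset B x"
  unfolding coset_def using lin_closed_zero by force

lemma coset_eq_iff:
  assumes "lin_closed B"
  shows "coset B x = coset B y \<longleftrightarrow> (\<lambda>s. x s - y s) \<in> B"
proof
  assume "coset B x = coset B y"
  then have "x \<in> coset B y" using coset_self[OF assms] by blast
  then obtain b where "b \<in> B" "x = (\<lambda>s. y s + b s)" unfolding coset_def by blast
  moreover from this have "(\<lambda>s. x s - y s) = b" by (simp add: fun_eq_iff)
  ultimately show "(\<lambda>s. x s - y s) \<in> B" by simp
next
  assume d: "(\<lambda>s. x s - y s) \<in> B"
  have "z \<in> coset B y" if "z \<in> coset B x" for z
  proof -
    from that obtain b where "b \<in> B" "z = (\<lambda>s. x s + b s)" unfolding coset_def by blast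
    moreover from this have "(\<lambda>s. 1 * (x s - y s) + b s) \<in> B"
      using lin_closed_lincomb[OF assms d] by blast
    ultimately show ?thesis unfolding coset_def by (auto intro!: exI[of _ "\<lambda>s. x s - y s + b s"])
  qed
  moreover have "z \<in> coset B x" if "z \<in> coset B y" for z
  proof -
    from that obtain b where "b \<in> B" "z = (\<lambda>s. y s + b s)" unfolding coset_def by blast
    moreover from this have "(\<lambda>s. (-1) * (x s - y s) + b s) \<in> B"
      using lin_closed_lincomb[OF assms d] by blast
    ultimately show ?thesis unfolding coset_def by (auto intro!: exI[of _ "\<lambda>s. y s - x s + b s"])
  qed
  ultimately show "coset B x = coset B y" by blast
qed

lemma coset_lincomb:
  assumes "lin_closed B"
  shows "coset B (\<lambda>s. c * a s + b s) =
    {(\<lambda>s. c * u s + v s) | u v. u \<in> coset B a \<and> v \<in> coset B b}"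
proof (intro set_eqI iffI)
  fix z assume "z \<in> coset B (\<lambda>s. c * a s + b s)"
  then obtain w where w: "w \<in> B" "z = (\<lambda>s. c * a s + (b s + w s))"
    unfolding coset_def by (auto simp: add.assoc)
  moreover have "(\<lambda>s. b s + w s) \<in> coset B b" using w(1) unfolding coset_def by blast
  ultimately show "z \<in> {(\<lambda>s. c * u s + v s) | u v. u \<in> coset B a \<and> v \<in> coset B b}"
    using coset_self[OF assms, of a] by (intro CollectI exI[of _ a] exI[of _ "\<lambda>s. b s + w s"]) simp
next
  fix z assume "z \<in> {(\<lambda>s. c * u s + v s) | u v. u \<in> coset B a \<and> v \<in> coset B b}"
  then obtain w1 w2 where "w1 \<in> B" "w2 \<in> B" "z = (\<lambda>s. c * (a s + w1 s) + (b s + w2 s))"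
    unfolding coset_def by blast
  moreover from this have "(\<lambda>s. c * w1 s + w2 s) \<in> B" using lin_closed_lincomb[OF assms] by blast
  ultimately show "z \<in> coset B (\<lambda>s. c * a s + b s)"
    unfolding coset_def
    by (intro CollectI exI[of _ "\<lambda>s. c * w1 s + w2 s"] conjI) (simp_all add: fun_eq_iff algebra_simps)
qed

locale linear_quotient_map =
  fixes B :: "('x \<Rightarrow> 'k::field) set" and B' :: "('y \<Rightarrow> 'k) set"
    and Z :: "('x \<Rightarrow> 'k) set" and Z' :: "('y \<Rightarrow> 'k) set" and P :: "('x \<Rightarrow> 'k) \<Rightarrow> 'y \<Rightarrow> 'k"
  assumes B: "lin_closed B" and B': "lin_closed B'"
    and Z_lincomb: "\<And>x y c. x \<in> Z \<Longrightarrow> y \<in> Z \<Longrightarrow> (\<lambda>s. c * x s + y s) \<in> Z"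
    and P_lincomb: "\<And>x y c. x \<in> Z \<Longrightarrow> y \<in> Z \<Longrightarrow> P (\<lambda>s. c * x s + y s) = (\<lambda>s. c * P x s + P y s)"
    and P_image: "P ` Z = Z'"
    and P_kernel: "\<And>x. x \<in> Z \<Longrightarrow> P x \<in> B' \<longleftrightarrow> x \<in> B"
begin

lemma coset_P_eq_iff:
  assumes "x \<in> Z" "x' \<in> Z"
  shows "coset B' (P x) = coset B' (P x') \<longleftrightarrow> coset B x = coset B x'"
proof -
  have "(\<lambda>s. x s - x' s) \<in> Z" using Z_lincomb[OF assms(2,1), of "-1"] by simp
  moreover have "P (\<lambda>s. x s - x' s) = (\<lambda>s. P x s - P x' s)"
    using P_lincomb[OF assms(2,1), of "-1"] by simp
  ultimately show ?thesis
    using P_kernel[of "\<lambda>s. x s - x' s"] by (simp add: coset_eq_iff[OF B] coset_eq_iff[OF B'])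
qed

definition induced_map :: "('x \<Rightarrow> 'k) set \<Rightarrow> ('y \<Rightarrow> 'k) set" where
  "induced_map X = coset B' (P (SOME x. x \<in> Z \<and> X = coset B x))"

lemma induced_map_coset: "x \<in> Z \<Longrightarrow> induced_map (coset B x) = coset B' (P x)"
proof -
  assume x: "x \<in> Z"
  define x' where "x' = (SOME x'. x' \<in> Z \<and> coset B x = coset B x')"
  have "x' \<in> Z \<and> coset B x = coset B x'"
    unfolding x'_def by (rule someI[of _ x]) (simp add: x)
  then have "coset B' (P x') = coset B' (P x)" using coset_P_eq_iff[of x' x] x by simp
  then show ?thesis unfolding induced_map_def x'_def by simp
qed

lemma bij_betw_induced_map: "bij_betw induced_map (coset B ` Z) (coset B' ` Z')"
  unfolding bij_betw_def
proof
  show "inj_on induced_map (coset B ` Z)"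
  proof (rule inj_onI)
    fix X X' assume "X \<in> coset B ` Z" "X' \<in> coset B ` Z" "induced_map X = induced_map X'"
    then obtain x x' where "x \<in> Z" "x' \<in> Z" "X = coset B x" "X' = coset B x'"
      "coset B' (P x) = coset B' (P x')"
      using induced_map_coset by auto
    then show "X = X'" using coset_P_eq_iff by simp
  qed
  show "induced_map ` coset B ` Z = coset B' ` Z'"
    unfolding P_image[symmetric] image_image by (rule image_cong) (simp_all add: induced_map_coset)
qed

lemma induced_map_lincomb:
  assumes "x \<in> Z" "y \<in> Z"
  shows "induced_map (coset B (\<lambda>s. c * x s + y s)) =
    {(\<lambda>s. c * u s + v s) | u v. u \<in> induced_map (coset B x) \<and> v \<in> induced_map (coset B y)}"
  using induced_map_coset[OF Z_lincomb[OF assms]] P_lincomb[OF assms]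
  by (simp add: assms induced_map_coset coset_lincomb[OF B'])

lemma induced_iso:
  "\<exists>F. bij_betw F (coset B ` Z) (coset B' ` Z') \<and>
    (\<forall>x\<in>Z. \<forall>y\<in>Z. \<forall>c. F (coset B (\<lambda>s. c * x s + y s)) =
       {(\<lambda>s. c * u s + v s) | u v. u \<in> F (coset B x) \<and> v \<in> F (coset B y)})"
  using bij_betw_induced_map induced_map_lincomb by blast

end

lemma hboundariesI:
  "u \<in> kspan (hrelgens smA smM n) \<Longrightarrow> y \<in> hchains (Suc n) \<Longrightarrow>
    z = (\<lambda>s. u s + hbd mul l r y s) \<Longrightarrow> z \<in> hboundaries smA mul smM l r n"
  unfolding hboundaries_def by blast

lemma hboundaries_lin_closed: "lin_closed (hboundaries smA mul smM l r n)"
  unfolding lin_closed_def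
proof (intro conjI ballI allI)
  show "(\<lambda>s. 0) \<in> hboundaries smA mul smM l r n"
    by (rule hboundariesI[OF kspan.kspan_zero hchains_zero]) (simp add: hbd_zero)
  fix x y c
  assume "x \<in> hboundaries smA mul smM l r n" "y \<in> hboundaries smA mul smM l r n"
  then obtain u1 y1 u2 y2 where
    x: "x = (\<lambda>s. u1 s + hbd mul l r y1 s)" "u1 \<in> kspan (hrelgens smA smM n)" "y1 \<in> hchains (Suc n)"
    and y: "y = (\<lambda>s. u2 s + hbd mul l r y2 s)" "u2 \<in> kspan (hrelgens smA smM n)" "y2 \<in> hchains (Suc n)"
    unfolding hboundaries_def by blast
  have "hbd mul l r (\<lambda>s. c * y1 s + y2 s) = (\<lambda>s. c * hbd mul l r y1 s + hbd mul l r y2 s)"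
    using x y by (intro hbd_lincomb hchains_finite_support)
  then have "(\<lambda>s. c * x s + y s) = (\<lambda>s. (c * u1 s + u2 s) + hbd mul l r (\<lambda>s. c * y1 s + y2 s) s)"
    using x y by (simp add: fun_eq_iff algebra_simps)
  moreover have "(\<lambda>s. c * u1 s + u2 s) \<in> kspan (hrelgens smA smM n)"
    using x y by (simp add: kspan_lincomb)
  moreover have "(\<lambda>s. c * y1 s + y2 s) \<in> hchains (Suc n)"
    using x y by (simp add: hchains_lincomb)
  ultimately show "(\<lambda>s. c * x s + y s) \<in> hboundaries smA mul smM l r n"
    by (intro hboundariesI)
qed

lemma hcycles_lincomb:
  assumes "x \<in> hcycles smA mul smM l r n" "y \<in> hcycles smA mul smM l r n"
  shows "(\<lambda>s. c * x s + y s) \<in> hcycles smA mul smM l r n"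
proof -
  have "hbd mul l r (\<lambda>s. c * x s + y s) = (\<lambda>s. c * hbd mul l r x s + hbd mul l r y s)"
    using assms by (intro hbd_lincomb) (auto simp: hcycles_def intro: hchains_finite_support)
  then show ?thesis using assms by (auto simp: hcycles_def hchains_lincomb kspan_lincomb)
qed

section \<open>Inserting a unit: the chain homotopy\<close>

definition insert_unit :: "('a \<Rightarrow> 'a) \<Rightarrow> 'a \<Rightarrow> nat \<Rightarrow> 'a list \<Rightarrow> 'a list" where
  "insert_unit e E j as = map e (take j as) @ E # drop j as"

lemma length_insert_unit: "length (insert_unit e E j as) = Suc (length as)"
  by (simp add: insert_unit_def)

lemma insert_unit_append: "j = length xs \<Longrightarrow> insert_unit e E j (xs @ ys) = map e xs @ E # ys"
  by (simp add: insert_unit_def)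

lemma slotwise_linear_insert_unit:
  assumes "\<And>x y. e (x + y) = e x + e y" "\<And>c x. e (smA c x) = smA c (e x)"
  shows "slotwise_linear smA smA k (Suc k) (insert_unit e E j)"
  unfolding slotwise_linear_def
proof (intro conjI allI impI)
  fix as :: "'a list" assume "length as = k"
  then show "length (insert_unit e E j as) = Suc k" by (simp add: length_insert_unit)
next
  fix i assume "i < k"
  show "\<exists>i'<Suc k. \<exists>h. (\<forall>x y. h (x + y) = h x + h y) \<and> (\<forall>c x. h (smA c x) = smA c (h x)) \<and>
      (\<forall>as v. length as = k \<longrightarrow> insert_unit e E j (as[i := v]) = (insert_unit e E j as)[i' := h v])"
  proof (cases "i < j")
    case True
    then show ?thesis using \<open>i < k\<close> assms
      by (intro exI[of _ i] exI[of _ e])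
        (auto simp: insert_unit_def take_update_swap map_update list_update_append)
  next
    case False
    then show ?thesis using \<open>i < k\<close>
      by (intro exI[of _ "Suc i"] exI[of _ id])
        (auto simp: insert_unit_def drop_update_swap list_update_append Suc_diff_le)
  qed
qed

definition unit_homotopy ::
  "('a \<Rightarrow> 'a) \<Rightarrow> 'a \<Rightarrow> ('m \<times> 'a list \<Rightarrow> 'k::field) \<Rightarrow> 'm \<times> 'a list \<Rightarrow> 'k" where
  "unit_homotopy e E = lin_ext (\<lambda>(m, as) s.
     \<Sum>j\<in>{0..length as}. (-1)^j * gen (m, insert_unit e E j as) s)"

lemma unit_homotopy_gen:
  "unit_homotopy e E (gen (m, as)) = (\<lambda>s. \<Sum>j\<in>{0..length as}. (-1)^j * gen (m, insert_unit e E j as) s)"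
  by (simp add: unit_homotopy_def lin_ext_gen)

lemma insertion_sum_hchains:
  "length as = k \<Longrightarrow>
    (\<lambda>s. \<Sum>j\<in>{0..length as}. (-1)^j * gen (m, insert_unit e E j as) s :: 'k::field) \<in> hchains (Suc k)"
  by (intro hchains_sum) (simp_all add: hchains_gen length_insert_unit)

lemma finite_support_unit_homotopy:
  "finite_support x \<Longrightarrow> finite_support (unit_homotopy e E x)"
  unfolding unit_homotopy_def
  by (rule finite_support_lin_ext) (auto intro: hchains_finite_support insertion_sum_hchains)

lemma unit_homotopy_hchains: "x \<in> hchains k \<Longrightarrow> unit_homotopy e E x \<in> hchains (Suc k)"
  unfolding unit_homotopy_def
  by (rule lin_ext_hchains) (auto intro: hchains_finite_support insertion_sum_hchains)

lemma unit_homotopy_zero: "unit_homotopy e E (\<lambda>s. 0) = (\<lambda>s. 0)"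
  by (simp add: unit_homotopy_def lin_ext_zero)

lemma unit_homotopy_lincomb:
  "finite_support x \<Longrightarrow> finite_support y \<Longrightarrow>
    unit_homotopy e E (\<lambda>s. c * x s + y s) = (\<lambda>s. c * unit_homotopy e E x s + unit_homotopy e E y s)"
  unfolding unit_homotopy_def by (rule lin_ext_lincomb)

lemma unit_homotopy_kspan_hrelgens:
  fixes u :: "'m::ab_group_add \<times> 'a::ab_group_add list \<Rightarrow> 'k::field"
  assumes "\<And>x y. e (x + y) = e x + e y" "\<And>c x. e (smA c x) = smA c (e x)"
    and u: "u \<in> kspan (hrelgens smA smM k)"
  shows "unit_homotopy e E u \<in> kspan (hrelgens smA smM (Suc k))"
proof -
  have "unit_homotopy e E u =
      lin_ext (\<lambda>t s. \<Sum>j\<in>{0..k}. (-1)^j * gen (apsnd (insert_unit e E j) t) s) u"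
    unfolding unit_homotopy_def
  proof (rule lin_ext_cong)
    fix t assume "u t \<noteq> 0"
    moreover obtain m as where t: "t = (m, as)" by (cases t)
    ultimately have "length as = k"
      using kspan_hrelgens_hchains[OF u] by (auto simp: hchains_def)
    then show "(\<lambda>(m, as) s. \<Sum>j\<in>{0..length as}. (-1)^j * gen (m, insert_unit e E j as) s) t =
        (\<lambda>s. \<Sum>j\<in>{0..k}. (-1)^j * gen (apsnd (insert_unit e E j) t) s)"
      using t by simp
  qed
  also have "\<dots> = (\<lambda>s. \<Sum>j\<in>{0..k}. (-1)^j * relabel (apsnd (insert_unit e E j)) u s)"
    unfolding relabel_def by (rule lin_ext_sum_maps) simp
  also have "\<dots> \<in> kspan (hrelgens smA smM (Suc k))"
    using slotwise_linear_insert_unit[where e = e and smA = smA, OF assms(1,2)]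
    by (intro kspan_sum relabel_kspan_hrelgens[OF _ u]) simp_all
  finally show ?thesis .
qed

text \<open>The hypotheses are the simplicial identities, with \<open>D i j\<close> standing for \<open>d\<^sub>i s\<^sub>j\<close>
  and \<open>E i j\<close> for \<open>s\<^sub>j d\<^sub>i\<close>.\<close>

lemma alternating_double_sum_telescope:
  fixes D E :: "nat \<Rightarrow> nat \<Rightarrow> 'v::comm_ring_1"
  assumes "\<And>i j. i < j \<Longrightarrow> j \<le> n \<Longrightarrow> D i j = E i (j - 1)"
    and "\<And>i j. j + 1 < i \<Longrightarrow> i \<le> n + 1 \<Longrightarrow> D i j = E (i - 1) j"
    and "\<And>i. 1 \<le> i \<Longrightarrow> i \<le> n \<Longrightarrow> D i i = D i (i - 1)"
  shows "(\<Sum>j\<in>{0..n}. (-1)^j * (\<Sum>i\<in>{0..n+1}. (-1)^i * D i j))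
       + (\<Sum>i\<in>{0..n}. (-1)^i * (\<Sum>j\<in>{0..<n}. (-1)^j * E i j)) = D 0 0 - D (n+1) n"
  using assms
proof (induction n)
  case 0 then show ?case by simp
next
  case (Suc n)
  let ?S = "\<lambda>n. \<Sum>j\<in>{0..n}. (-1)^j * (\<Sum>i\<in>{0..n+1}. (-1)^i * D i j)"
    and ?T = "\<lambda>n. \<Sum>i\<in>{0..n}. (-1)^i * (\<Sum>j\<in>{0..<n}. (-1)^j * E i j)"
  have IH: "?S n + ?T n = D 0 0 - D (n+1) n"
    by (rule Suc.IH) (use Suc.prems in auto)
  have S: "?S (Suc n) = ?S n + (\<Sum>j\<in>{0..n}. (-1)^j * ((-1)^(n+2) * D (n+2) j))
      + (-1)^(n+1) * ((\<Sum>i\<in>{0..n}. (-1)^i * D i (n+1)) + (-1)^(n+1) * D (n+1) (n+1)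
        + (-1)^(n+2) * D (n+2) (n+1))"
  proof -
    have "(\<Sum>i\<in>{0..Suc n + 1}. f i) = (\<Sum>i\<in>{0..n+1}. f i) + f (n+2)"
      and "(\<Sum>i\<in>{0..Suc n}. f i) = (\<Sum>i\<in>{0..n}. f i) + f (n+1)"
      and "(\<Sum>i\<in>{0..n+1}. f i) = (\<Sum>i\<in>{0..n}. f i) + f (n+1)" for f :: "nat \<Rightarrow> 'v"
      by (simp_all add: numeral_2_eq_2)
    then show ?thesis by (simp only: distrib_left sum.distrib add_ac)
  qed
  have T: "?T (Suc n) = ?T n + (\<Sum>i\<in>{0..n}. (-1)^i * ((-1)^n * E i n))
      + (-1)^(n+1) * (\<Sum>j\<in>{0..n}. (-1)^j * E (n+1) j)"
  proof -
    have "(\<Sum>i\<in>{0..Suc n}. f i) = (\<Sum>i\<in>{0..n}. f i) + f (n+1)"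
      and "(\<Sum>i\<in>{0..<Suc n}. f i) = (\<Sum>i\<in>{0..<n}. f i) + f n"
      and "(\<Sum>i\<in>{0..n}. f i) = (\<Sum>i\<in>{0..<n}. f i) + f n" for f :: "nat \<Rightarrow> 'v"
      by (simp_all add: atLeastLessThanSuc_atLeastAtMost[symmetric])
    then show ?thesis by (simp only: distrib_left sum.distrib add_ac)
  qed
  have "(\<Sum>i\<in>{0..n}. (-1)^i * D i (n+1)) = (\<Sum>i\<in>{0..n}. (-1)^i * E i n)"
    by (rule sum.cong) (use Suc.prems(1) in auto)
  moreover have "(\<Sum>j\<in>{0..n}. (-1)^j * D (n+2) j) = (\<Sum>j\<in>{0..n}. (-1)^j * E (n+1) j)"
    by (rule sum.cong) (use Suc.prems(2) in auto)
  moreover have "D (n+1) (n+1) = D (n+1) n" using Suc.prems(3)[of "n+1"] by simp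
  moreover have "(\<Sum>j\<in>{0..n}. (-1)^j * (x * F j)) = x * (\<Sum>j\<in>{0..n}. (-1)^j * F j)"
    for x :: 'v and F by (simp add: sum_distrib_left mult.left_commute)
  moreover have "(-1::'v)^n * (-1)^n = 1" by (simp add: power_add[symmetric])
  ultimately show ?case using IH by (simp only: S T) (simp add: algebra_simps)
qed

lemma split_list_at: "k \<le> length as \<Longrightarrow> \<exists>xs ys. as = xs @ ys \<and> length xs = k"
  by (intro exI[of _ "take k as"] exI[of _ "drop k as"]) simp

lemma split_list_at_nth: "k < length as \<Longrightarrow> \<exists>us a vs. as = us @ a # vs \<and> length us = k"
  by (intro exI[of _ "take k as"] exI[of _ "as ! k"] exI[of _ "drop (Suc k) as"])
    (simp add: Cons_nth_drop_Suc)

lemma split_list_at_nth2: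
  "Suc k < length as \<Longrightarrow> \<exists>us a b vs. as = us @ a # b # vs \<and> length us = k"
  by (intro exI[of _ "take k as"] exI[of _ "as ! k"] exI[of _ "as ! Suc k"]
      exI[of _ "drop (Suc (Suc k)) as"]) (simp add: Cons_nth_drop_Suc)

locale unit_insertion =
  fixes mul :: "'a \<Rightarrow> 'a \<Rightarrow> 'a" and l :: "'a \<Rightarrow> 'm \<Rightarrow> 'm" and r :: "'m \<Rightarrow> 'a \<Rightarrow> 'm"
    and e :: "'a \<Rightarrow> 'a" and E :: 'a
  assumes e_mul: "\<And>a b. e (mul a b) = mul (e a) (e b)"
    and mul_unit_right: "\<And>a. mul (e a) E = e a"
    and mul_unit_left: "\<And>a. mul E a = e a"
    and ract_e: "\<And>m a. r m (e a) = r m a"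
    and ract_unit: "\<And>m. r m E = m"
    and lact_unit: "\<And>m. l E m = m"
begin

abbreviation "d \<equiv> face mul l r"
abbreviation "ins \<equiv> insert_unit e E"

lemma face_insert_unit_less:
  assumes "i < j" "j \<le> length as"
  shows "d i (m, ins j as) = apsnd (ins (j - 1)) (d i (m, as))"
proof (cases "i = 0")
  case True
  obtain xs ys where as: "as = xs @ ys" "length xs = j" using split_list_at assms(2) by blast
  obtain a xs' where xs: "xs = a # xs'" using as assms True by (cases xs) auto
  have "ins j as = map e xs @ E # ys" unfolding as(1) by (rule insert_unit_append) (simp add: as(2))
  then show ?thesis using as xs True by (simp add: face_0_Cons ract_e insert_unit_append)
next
  case False
  obtain us a b vs where as: "as = us @ a # b # vs" "length us = i - 1"
    using split_list_at_nth2[of "i - 1" as] assms False by auto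
  have "j - i - 1 \<le> length vs" using assms as False by simp
  then obtain ws zs where vs: "vs = ws @ zs" "length ws = j - i - 1"
    using split_list_at by blast
  have "ins j ((us @ a # b # ws) @ zs) = map e (us @ a # b # ws) @ E # zs"
    by (rule insert_unit_append) (use as vs assms False in simp)
  then have "ins j as = map e us @ e a # e b # (map e ws @ E # zs)" using as vs by simp
  moreover have "ins (j - 1) ((us @ mul a b # ws) @ zs) = map e (us @ mul a b # ws) @ E # zs"
    by (rule insert_unit_append) (use as vs assms False in simp)
  then have "ins (j - 1) (us @ mul a b # ws @ zs) = map e us @ mul (e a) (e b) # map e ws @ E # zs"
    by (simp add: e_mul)
  ultimately show ?thesis using as vs False by (simp add: face_middle)
qed

lemma face_insert_unit_greater:
  assumes "j + 1 < i" "i \<le> length as + 1"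
  shows "d i (m, ins j as) = apsnd (ins j) (d (i - 1) (m, as))"
proof -
  obtain xs ys where as: "as = xs @ ys" "length xs = j" using split_list_at[of j as] assms by auto
  show ?thesis
  proof (cases "i = length as + 1")
    case True
    obtain ys' a where ys: "ys = ys' @ [a]" using as assms by (cases ys rule: rev_cases) auto
    have "d i (m, (map e xs @ E # ys') @ [a]) = (l a m, map e xs @ E # ys')"
      by (rule face_snoc) (use as ys True in simp)
    moreover have "d (i - 1) (m, (xs @ ys') @ [a]) = (l a m, xs @ ys')"
      by (rule face_snoc) (use as ys True in simp)
    ultimately show ?thesis using as ys by (simp add: insert_unit_append)
  next
    case False
    have "Suc (i - 2 - j) < length ys" using as assms False by simp
    then obtain ws a b vs where ys: "ys = ws @ a # b # vs" "length ws = i - 2 - j"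
      using split_list_at_nth2 by blast
    have "d i (m, (map e xs @ E # ws) @ a # b # vs) = (m, (map e xs @ E # ws) @ mul a b # vs)"
      by (rule face_middle) (use as ys assms in simp)
    moreover have "d (i - 1) (m, (xs @ ws) @ a # b # vs) = (m, (xs @ ws) @ mul a b # vs)"
      by (rule face_middle) (use as ys assms in simp)
    ultimately show ?thesis using as ys by (simp add: insert_unit_append)
  qed
qed

lemma face_insert_unit_same:
  assumes "1 \<le> i" "i \<le> length as"
  shows "d i (m, ins i as) = d i (m, ins (i - 1) as)"
proof -
  have "i - 1 < length as" using assms by simp
  then obtain xs a ys where as: "as = xs @ a # ys" "length xs = i - 1"
    using split_list_at_nth by blast
  have "d i (m, map e xs @ e a # E # ys) = (m, map e xs @ mul (e a) E # ys)"
    by (rule face_middle) (use as assms in simp)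
  moreover have "d i (m, map e xs @ E # a # ys) = (m, map e xs @ mul E a # ys)"
    by (rule face_middle) (use as assms in simp)
  moreover have "ins i as = map e xs @ e a # E # ys" "ins (i - 1) as = map e xs @ E # a # ys"
    using as assms by (simp_all add: insert_unit_def)
  ultimately show ?thesis by (simp add: mul_unit_right mul_unit_left)
qed

lemma face_0_insert_unit_0: "d 0 (m, ins 0 as) = (m, as)"
  by (simp add: insert_unit_def face_0_Cons ract_unit)

lemma face_last_insert_unit_last: "d (Suc (length as)) (m, ins (length as) as) = (m, map e as)"
  by (simp add: insert_unit_def face_snoc[where as = "map e as"] lact_unit)

lemma hbd_unit_homotopy_gen:
  "hbd mul l r (unit_homotopy e E (gen (m, as))) t =
    (\<Sum>j\<in>{0..length as}. (-1)^j * (\<Sum>i\<in>{0..length as + 1}. (-1)^i * gen (d i (m, ins j as)) t) :: 'k::field)"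
proof -
  have "hbd mul l r (unit_homotopy e E (gen (m, as))) =
      (\<lambda>t. \<Sum>j\<in>{0..length as}. (-1)^j * hbgen mul l r (m, ins j as) t :: 'k)"
    unfolding unit_homotopy_gen hbd_eq_lin_ext
    by (subst lin_ext_sum) (simp_all add: finite_support_gen lin_ext_gen)
  moreover have "ins j as \<noteq> []" for j by (simp add: insert_unit_def)
  ultimately show ?thesis by (simp add: hbgen_eq_face_sum length_insert_unit)
qed

lemma unit_homotopy_hbd_gen:
  "unit_homotopy e E (hbd mul l r (gen (m, as))) t =
    (\<Sum>i\<in>{0..length as}. (-1)^i * (\<Sum>j\<in>{0..<length as}. (-1)^j *
      gen (apsnd (ins j) (d i (m, as))) t) :: 'k::field)"
proof (cases "as = []")
  case True then show ?thesis by (simp add: hbd_gen hbgen_Nil unit_homotopy_zero)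
next
  case False
  have expand: "unit_homotopy e E (hbd mul l r (gen (m, as))) =
      (\<lambda>t. \<Sum>i\<in>{0..length as}. (-1)^i * unit_homotopy e E (gen (d i (m, as))) t :: 'k)"
    unfolding hbd_gen hbgen_eq_face_sum[OF False] unit_homotopy_def
    by (subst lin_ext_sum) (simp_all add: finite_support_gen lin_ext_gen)
  have face_term: "unit_homotopy e E (gen (d i (m, as))) t =
      (\<Sum>j\<in>{0..<length as}. (-1)^j * gen (apsnd (ins j) (d i (m, as))) t :: 'k)"
    if "i \<in> {0..length as}" for i
  proof -
    obtain m' bs where f: "d i (m, as) = (m', bs)" by (cases "d i (m, as)")
    moreover have "length bs = length as - 1" using length_face[OF False, of i mul l r m] that f by simp
    moreover have "{0..length as - 1} = {0..<length as}" using False by (cases as) auto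
    ultimately show ?thesis by (simp add: unit_homotopy_gen)
  qed
  show ?thesis unfolding expand by (rule sum.cong) (simp_all add: face_term)
qed

lemma chain_homotopy_gen:
  "gen (m, as) = (\<lambda>t. gen (m, map e as) t +
     (hbd mul l r (unit_homotopy e E (gen (m, as))) t + unit_homotopy e E (hbd mul l r (gen (m, as))) t)
     :: 'k::field)"
proof
  fix t
  define n where "n = length as"
  define D where "D i j = (gen (d i (m, ins j as)) t :: 'k)" for i j
  define D' where "D' i j = (gen (apsnd (ins j) (d i (m, as))) t :: 'k)" for i j
  have "hbd mul l r (unit_homotopy e E (gen (m, as))) t + unit_homotopy e E (hbd mul l r (gen (m, as))) t
      = (\<Sum>j\<in>{0..n}. (-1)^j * (\<Sum>i\<in>{0..n+1}. (-1)^i * D i j))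
        + (\<Sum>i\<in>{0..n}. (-1)^i * (\<Sum>j\<in>{0..<n}. (-1)^j * D' i j))"
    unfolding hbd_unit_homotopy_gen unit_homotopy_hbd_gen D_def D'_def n_def ..
  also have "\<dots> = D 0 0 - D (n+1) n"
  proof (rule alternating_double_sum_telescope)
    show "D i j = D' i (j - 1)" if "i < j" "j \<le> n" for i j
      using that face_insert_unit_less by (simp add: D_def D'_def n_def)
    show "D i j = D' (i - 1) j" if "j + 1 < i" "i \<le> n + 1" for i j
      using that face_insert_unit_greater by (simp add: D_def D'_def n_def)
    show "D i i = D i (i - 1)" if "1 \<le> i" "i \<le> n" for i
      using that face_insert_unit_same by (simp add: D_def n_def)
  qed
  also have "\<dots> = gen (m, as) t - gen (m, map e as) t"
    by (simp add: D_def n_def face_0_insert_unit_0 face_last_insert_unit_last)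
  finally show "gen (m, as) t = gen (m, map e as) t +
     (hbd mul l r (unit_homotopy e E (gen (m, as))) t + unit_homotopy e E (hbd mul l r (gen (m, as))) t :: 'k)"
    by (simp add: eq_diff_eq ac_simps)
qed

lemma chain_homotopy:
  fixes x :: "'m \<times> 'a list \<Rightarrow> 'k::field"
  assumes "finite_support x"
  shows "x = (\<lambda>t. chain_map e x t +
    (hbd mul l r (unit_homotopy e E x) t + unit_homotopy e E (hbd mul l r x) t))"
  using assms
proof (induction x rule: finite_support_induct)
  case zero
  then show ?case by (simp add: relabel_zero unit_homotopy_zero hbd_zero)
next
  case (step x c u)
  obtain m as where u: "u = (m, as)" by (cases u)
  have fin: "finite_support (gen u :: _ \<Rightarrow> 'k)" "finite_support (unit_homotopy e E (gen u) :: _ \<Rightarrow> 'k)"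
    "finite_support (hbd mul l r (gen u) :: _ \<Rightarrow> 'k)"
    by (simp_all add: finite_support_gen finite_support_unit_homotopy finite_support_hbd)
  have "finite_support (unit_homotopy e E x)" "finite_support (hbd mul l r x)"
    using step.hyps by (simp_all add: finite_support_unit_homotopy finite_support_hbd)
  then show ?case
    using step.hyps fin
    apply (simp add: relabel_lincomb unit_homotopy_lincomb hbd_lincomb relabel_gen)
    apply (subst chain_homotopy_gen[of m as, folded u], subst step.IH)
    by (simp add: u algebra_simps)
qed

end

section \<open>Retractions of algebras\<close>

locale hochschild_retraction =
  fixes smA :: "'k::field \<Rightarrow> 'a::ab_group_add \<Rightarrow> 'a" and mulA :: "'a \<Rightarrow> 'a \<Rightarrow> 'a"
    and lA :: "'a \<Rightarrow> 'm::ab_group_add \<Rightarrow> 'm" and rA :: "'m \<Rightarrow> 'a \<Rightarrow> 'm"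
    and smB :: "'k \<Rightarrow> 'b::ab_group_add \<Rightarrow> 'b" and mulB :: "'b \<Rightarrow> 'b \<Rightarrow> 'b"
    and lB :: "'b \<Rightarrow> 'm \<Rightarrow> 'm" and rB :: "'m \<Rightarrow> 'b \<Rightarrow> 'm"
    and f :: "'a \<Rightarrow> 'b" and g :: "'b \<Rightarrow> 'a" and E :: 'a
  assumes f_add: "\<And>x y. f (x + y) = f x + f y"
    and f_smul: "\<And>c x. f (smA c x) = smB c (f x)"
    and f_mul: "\<And>x y. f (mulA x y) = mulB (f x) (f y)"
    and f_lact: "\<And>a m. lB (f a) m = lA a m"
    and f_ract: "\<And>m a. rB m (f a) = rA m a"
    and g_add: "\<And>x y. g (x + y) = g x + g y"
    and g_smul: "\<And>c x. g (smB c x) = smA c (g x)"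
    and g_mul: "\<And>x y. g (mulB x y) = mulA (g x) (g y)"
    and f_g: "\<And>b. f (g b) = b"
    and E_mul: "\<And>a. mulA E a = g (f a)"
    and mul_E: "\<And>a. mulA (g (f a)) E = g (f a)"
    and lact_E: "\<And>m. lA E m = m"
    and ract_E: "\<And>m. rA m E = m"
begin

sublocale unit_insertion mulA lA rA "g \<circ> f" E
proof
  show "rA m ((g \<circ> f) a) = rA m a" for m a
    by (metis comp_apply f_g f_ract)
qed (simp_all add: f_mul g_mul E_mul mul_E lact_E ract_E)

lemma g_lact: "lA (g b) m = lB b m"
  by (metis f_g f_lact)

lemma g_ract: "rA m (g b) = rB m b"
  by (metis f_g f_ract)

abbreviation push :: "('m \<times> 'a list \<Rightarrow> 'k) \<Rightarrow> 'm \<times> 'b list \<Rightarrow> 'k" where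
  "push \<equiv> chain_map f"

abbreviation pull :: "('m \<times> 'b list \<Rightarrow> 'k) \<Rightarrow> 'm \<times> 'a list \<Rightarrow> 'k" where
  "pull \<equiv> chain_map g"

abbreviation H :: "('m \<times> 'a list \<Rightarrow> 'k) \<Rightarrow> 'm \<times> 'a list \<Rightarrow> 'k" where
  "H \<equiv> unit_homotopy (g \<circ> f) E"

lemma push_hbd:
  "finite_support x \<Longrightarrow> push (hbd mulA lA rA x) = hbd mulB lB rB (push x)"
  by (rule chain_map_hbd) (simp_all add: f_mul f_lact f_ract)

lemma pull_hbd:
  "finite_support y \<Longrightarrow> pull (hbd mulB lB rB y) = hbd mulA lA rA (pull y)"
  by (rule chain_map_hbd) (simp_all add: g_mul g_lact g_ract)

lemma push_kspan_hrelgens: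
  "u \<in> kspan (hrelgens smA smM k) \<Longrightarrow> push u \<in> kspan (hrelgens smB smM k)"
  by (rule relabel_kspan_hrelgens[OF slotwise_linear_map]) (simp_all add: f_add f_smul)

lemma pull_kspan_hrelgens:
  "u \<in> kspan (hrelgens smB smM k) \<Longrightarrow> pull u \<in> kspan (hrelgens smA smM k)"
  by (rule relabel_kspan_hrelgens[OF slotwise_linear_map]) (simp_all add: g_add g_smul)

lemma H_kspan_hrelgens:
  "u \<in> kspan (hrelgens smA smM k) \<Longrightarrow> H u \<in> kspan (hrelgens smA smM (Suc k))"
  by (rule unit_homotopy_kspan_hrelgens) (simp_all add: f_add g_add f_smul g_smul)

lemma push_pull:
  assumes "finite_support y"
  shows "push (pull y) = y"
proof -
  have "push (pull y) = relabel (apsnd (map f) \<circ> apsnd (map g)) y"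
    by (rule relabel_relabel[OF assms])
  also have "apsnd (map f) \<circ> apsnd (map g) = id"
    by (simp add: fun_eq_iff apsnd_def map_prod_def f_g split_def map_idI)
  also have "relabel id y = y" by (rule relabel_id[OF assms])
  finally show ?thesis .
qed

lemma pull_push_homotopic:
  assumes "finite_support x"
  shows "x = (\<lambda>t. pull (push x) t + (hbd mulA lA rA (H x) t + H (hbd mulA lA rA x) t))"
proof -
  have "pull (push x) = relabel (apsnd (map g) \<circ> apsnd (map f)) x"
    by (rule relabel_relabel[OF assms])
  also have "apsnd (map g) \<circ> apsnd (map f) = apsnd (map (g \<circ> f))"
    by (simp add: fun_eq_iff apsnd_def map_prod_def split_def)
  finally show ?thesis using chain_homotopy[OF assms] by simp
qed

lemma push_hcycles:
  assumes "x \<in> hcycles smA mulA smM lA rA n"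
  shows "push x \<in> hcycles smB mulB smM lB rB n"
proof -
  have "x \<in> hchains n" "hbd mulA lA rA x \<in> kspan (hrelgens smA smM (n - 1))"
    using assms by (simp_all add: hcycles_def)
  then show ?thesis
    by (simp add: hcycles_def chain_map_hchains push_kspan_hrelgens flip: push_hbd[OF hchains_finite_support])
qed

lemma pull_hcycles:
  assumes "y \<in> hcycles smB mulB smM lB rB n"
  shows "pull y \<in> hcycles smA mulA smM lA rA n"
proof -
  have "y \<in> hchains n" "hbd mulB lB rB y \<in> kspan (hrelgens smB smM (n - 1))"
    using assms by (simp_all add: hcycles_def)
  then show ?thesis
    by (simp add: hcycles_def chain_map_hchains pull_kspan_hrelgens flip: pull_hbd[OF hchains_finite_support])
qed

lemma push_hboundaries:
  assumes "z \<in> hboundaries smA mulA smM lA rA n"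
  shows "push z \<in> hboundaries smB mulB smM lB rB n"
proof -
  obtain u y where z: "z = (\<lambda>s. u s + hbd mulA lA rA y s)"
    and u: "u \<in> kspan (hrelgens smA smM n)" and y: "y \<in> hchains (Suc n)"
    using assms unfolding hboundaries_def by blast
  have "push z = (\<lambda>s. push u s + hbd mulB lB rB (push y) s)"
    using relabel_lincomb[of u "hbd mulA lA rA y" "apsnd (map f)" 1]
      kspan_hrelgens_hchains[OF u] y
    by (simp add: z hchains_finite_support finite_support_hbd push_hbd)
  then show ?thesis
    by (rule hboundariesI[OF push_kspan_hrelgens[OF u] chain_map_hchains[OF y]])
qed

lemma H_hbd_hcycles:
  assumes "x \<in> hcycles smA mulA smM lA rA n"
  shows "H (hbd mulA lA rA x) \<in> kspan (hrelgens smA smM n)"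
proof (cases n)
  case 0
  then show ?thesis
    using assms by (simp add: hcycles_def hbd_hchains_0 unit_homotopy_zero kspan.kspan_zero)
next
  case (Suc k)
  then have "hbd mulA lA rA x \<in> kspan (hrelgens smA smM k)" using assms by (simp add: hcycles_def)
  then show ?thesis unfolding Suc by (rule H_kspan_hrelgens)
qed

lemma decompose_by_homotopy:
  assumes x: "x \<in> hchains n" and fx: "push x = (\<lambda>s. u s + hbd mulB lB rB w s)"
    and u: "u \<in> kspan (hrelgens smB smM n)" and w: "w \<in> hchains (Suc n)"
  shows "x = (\<lambda>s. (pull u s + H (hbd mulA lA rA x) s)
      + hbd mulA lA rA (\<lambda>s. pull w s + H x s) s)"
proof -
  have fin: "finite_support u" "finite_support (hbd mulB lB rB w)" "finite_support (pull w)"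
    "finite_support (H x)"
    using kspan_hrelgens_hchains[OF u] w x
    by (simp_all add: hchains_finite_support finite_support_hbd finite_support_relabel
        finite_support_unit_homotopy)
  have "pull (push x) = (\<lambda>s. pull u s + hbd mulA lA rA (pull w) s)"
    using relabel_lincomb[OF fin(1,2), of "apsnd (map g)" 1] w
    by (simp add: fx pull_hbd hchains_finite_support)
  moreover have "hbd mulA lA rA (\<lambda>s. pull w s + H x s)
      = (\<lambda>s. hbd mulA lA rA (pull w) s + hbd mulA lA rA (H x) s)"
    using hbd_lincomb[OF fin(3,4), of mulA lA rA 1] by simp
  ultimately show ?thesis
    using pull_push_homotopic[OF hchains_finite_support[OF x]] by (simp add: fun_eq_iff algebra_simps)
qed

lemma hboundaries_of_push_hboundaries:
  assumes x: "x \<in> hcycles smA mulA smM lA rA n"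
    and "push x \<in> hboundaries smB mulB smM lB rB n"
  shows "x \<in> hboundaries smA mulA smM lA rA n"
proof -
  obtain u w where fx: "push x = (\<lambda>s. u s + hbd mulB lB rB w s)"
    and u: "u \<in> kspan (hrelgens smB smM n)" and w: "w \<in> hchains (Suc n)"
    using assms(2) unfolding hboundaries_def by blast
  have xn: "x \<in> hchains n" using x by (simp add: hcycles_def)
  have "(\<lambda>s. pull u s + H (hbd mulA lA rA x) s) \<in> kspan (hrelgens smA smM n)"
    using kspan_lincomb[OF pull_kspan_hrelgens[OF u] H_hbd_hcycles[OF x], of 1] by simp
  moreover have "(\<lambda>s. pull w s + H x s) \<in> hchains (Suc n)"
    using hchains_lincomb[OF chain_map_hchains[OF w] unit_homotopy_hchains[OF xn], of 1] by simp
  ultimately show ?thesis by (rule hboundariesI[OF _ _ decompose_by_homotopy[OF xn fx u w]])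
qed

theorem hochschild_iso: "hochschild_iso smA mulA smM lA rA smB mulB smM lB rB n"
proof -
  interpret linear_quotient_map "hboundaries smA mulA smM lA rA n" "hboundaries smB mulB smM lB rB n"
    "hcycles smA mulA smM lA rA n" "hcycles smB mulB smM lB rB n" "push"
  proof
    show "push (\<lambda>s. c * x s + y s) = (\<lambda>s. c * push x s + push y s)"
      if "x \<in> hcycles smA mulA smM lA rA n" "y \<in> hcycles smA mulA smM lA rA n" for x y c
      using that by (intro relabel_lincomb) (auto simp: hcycles_def intro: hchains_finite_support)
    show "push ` hcycles smA mulA smM lA rA n = hcycles smB mulB smM lB rB n"
    proof
      show "push ` hcycles smA mulA smM lA rA n \<subseteq> hcycles smB mulB smM lB rB n"
        using push_hcycles by blast
      show "hcycles smB mulB smM lB rB n \<subseteq> push ` hcycles smA mulA smM lA rA n"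
      proof
        fix y assume y: "y \<in> hcycles smB mulB smM lB rB n"
        then have "y \<in> hchains n" by (simp add: hcycles_def)
        then have "y = push (pull y)" by (simp add: push_pull hchains_finite_support)
        then show "y \<in> push ` hcycles smA mulA smM lA rA n" using pull_hcycles[OF y] by blast
      qed
    qed
    show "push x \<in> hboundaries smB mulB smM lB rB n \<longleftrightarrow> x \<in> hboundaries smA mulA smM lA rA n"
      if "x \<in> hcycles smA mulA smM lA rA n" for x
      using that push_hboundaries hboundaries_of_push_hboundaries by blast
  qed (simp_all add: hboundaries_lin_closed hcycles_lincomb)
  show ?thesis unfolding hochschild_iso_def hochschild_homology_def by (rule induced_iso)
qed

end

section \<open>The mapping cylinder\<close>

definition cyl_proj :: "('q \<Rightarrow> 'p::plus) \<Rightarrow> 'p \<times> 'q \<Rightarrow> 'p" where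
  "cyl_proj phi z = fst z + phi (snd z)"

definition cyl_incl :: "'p \<Rightarrow> 'p \<times> 'q::zero" where
  "cyl_incl p = (p, 0)"

lemma k_algebra_mul_zero:
  assumes "k_algebra sm mul one"
  shows "mul a 0 = 0" "mul 0 a = 0"
  using assms unfolding k_algebra_def by (metis add_cancel_right_right)+

lemma k_algebra_scale_zero: "k_algebra sm mul one \<Longrightarrow> sm c 0 = 0"
  unfolding k_algebra_def module_iff_vector_space[symmetric] by (simp add: module.scale_zero_right)

lemma alg_hom_zero: "alg_hom smQ mulQ oneQ smP mulP oneP phi \<Longrightarrow> phi 0 = 0"
  unfolding alg_hom_def by (metis add_cancel_right_right)

lemma cyl_proj_add:
  "alg_hom smQ mulQ oneQ smP mulP oneP phi \<Longrightarrow> cyl_proj phi (a + b) = cyl_proj phi a + cyl_proj phi b"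
  by (cases a, cases b) (simp add: cyl_proj_def alg_hom_def ac_simps)

lemma cyl_proj_smul:
  assumes "k_algebra smP mulP oneP" "alg_hom smQ mulQ oneQ smP mulP oneP phi"
  shows "cyl_proj phi (cyl_smul smP smQ c a) = smP c (cyl_proj phi a)"
  using assms unfolding k_algebra_def vector_space_def alg_hom_def
  by (cases a) (simp add: cyl_proj_def cyl_smul_def)

lemma cyl_proj_mul:
  assumes "k_algebra smP mulP oneP" "alg_hom smQ mulQ oneQ smP mulP oneP phi"
  shows "cyl_proj phi (cyl_mul phi mulP mulQ a b) = mulP (cyl_proj phi a) (cyl_proj phi b)"
  using assms unfolding k_algebra_def alg_hom_def
  by (cases a, cases b) (simp add: cyl_proj_def cyl_mul_def ac_simps)

lemma cyl_proj_incl: "alg_hom smQ mulQ oneQ smP mulP oneP phi \<Longrightarrow> cyl_proj phi (cyl_incl p) = p"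
  by (simp add: cyl_proj_def cyl_incl_def alg_hom_zero)

lemma cyl_lact_eq_proj:
  "k_bimodule smP mulP oneP smM lP rP \<Longrightarrow> cyl_lact phi lP z m = lP (cyl_proj phi z) m"
  by (cases z) (simp add: cyl_lact_def cyl_proj_def k_bimodule_def)

lemma cyl_ract_eq_proj:
  "k_bimodule smP mulP oneP smM lP rP \<Longrightarrow> cyl_ract phi rP m z = rP m (cyl_proj phi z)"
  by (cases z) (simp add: cyl_ract_def cyl_proj_def k_bimodule_def)

lemma cyl_incl_add: "cyl_incl (a + b) = cyl_incl a + (cyl_incl b :: 'p::plus \<times> 'q::monoid_add)"
  by (simp add: cyl_incl_def)

lemma cyl_incl_smul:
  "k_algebra smQ mulQ oneQ \<Longrightarrow> cyl_incl (smP c a) = cyl_smul smP smQ c (cyl_incl a)"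
  by (simp add: cyl_incl_def cyl_smul_def k_algebra_scale_zero)

lemma cyl_mul_incl:
  assumes "k_algebra smP mulP oneP" "k_algebra smQ mulQ oneQ" "alg_hom smQ mulQ oneQ smP mulP oneP phi"
  shows "cyl_mul phi mulP mulQ (cyl_incl a) (cyl_incl b) = cyl_incl (mulP a b)"
  by (simp add: cyl_mul_def cyl_incl_def alg_hom_zero[OF assms(3)] k_algebra_mul_zero[OF assms(1)]
      k_algebra_mul_zero[OF assms(2)])

lemma cyl_mul_incl_one_left:
  assumes "k_algebra smP mulP oneP" "k_algebra smQ mulQ oneQ" "alg_hom smQ mulQ oneQ smP mulP oneP phi"
  shows "cyl_mul phi mulP mulQ (cyl_incl oneP) z = cyl_incl (cyl_proj phi z)"
  using assms(1) unfolding k_algebra_def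
  by (cases z) (simp add: cyl_mul_def cyl_incl_def cyl_proj_def alg_hom_zero[OF assms(3)]
      k_algebra_mul_zero[OF assms(1)] k_algebra_mul_zero[OF assms(2)])

lemma cylinder_hochschild_retraction:
  assumes "k_algebra smP mulP oneP" "k_algebra smQ mulQ oneQ"
    and "alg_hom smQ mulQ oneQ smP mulP oneP phi" "k_bimodule smP mulP oneP smM lP rP"
  shows "hochschild_retraction (cyl_smul smP smQ) (cyl_mul phi mulP mulQ) (cyl_lact phi lP) (cyl_ract phi rP)
    smP mulP lP rP (cyl_proj phi) cyl_incl (cyl_incl oneP)"
proof
  have one: "mulP a oneP = a" "mulP oneP a = a" "lP oneP m = m" "rP m oneP = m" for a m
    using assms(1,4) by (simp_all add: k_algebra_def k_bimodule_def)
  show "cyl_mul phi mulP mulQ (cyl_incl oneP) z = cyl_incl (cyl_proj phi z)" for z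
    using assms(1-3) by (rule cyl_mul_incl_one_left)
  show "cyl_mul phi mulP mulQ (cyl_incl (cyl_proj phi z)) (cyl_incl oneP) = cyl_incl (cyl_proj phi z)" for z
    using one by (simp add: cyl_mul_incl[OF assms(1-3)])
  show "cyl_lact phi lP (cyl_incl oneP) m = m" "cyl_ract phi rP m (cyl_incl oneP) = m" for m
    using one assms(3) by (simp_all add: cyl_lact_eq_proj[OF assms(4)] cyl_ract_eq_proj[OF assms(4)] cyl_proj_incl)
qed (use assms in \<open>simp_all add: cyl_proj_add cyl_proj_smul cyl_proj_mul cyl_proj_incl cyl_lact_eq_proj
  cyl_ract_eq_proj cyl_incl_add cyl_incl_smul cyl_mul_incl\<close>)

theorem proposition1p2:
  fixes smP :: "'k::field \<Rightarrow> 'p::ab_group_add \<Rightarrow> 'p"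
    and mulP :: "'p \<Rightarrow> 'p \<Rightarrow> 'p" and oneP :: 'p
    and smQ :: "'k \<Rightarrow> 'q::ab_group_add \<Rightarrow> 'q"
    and mulQ :: "'q \<Rightarrow> 'q \<Rightarrow> 'q" and oneQ :: 'q
    and phi :: "'q \<Rightarrow> 'p"
    and smM :: "'k \<Rightarrow> 'm::ab_group_add \<Rightarrow> 'm"
    and lP :: "'p \<Rightarrow> 'm \<Rightarrow> 'm" and rP :: "'m \<Rightarrow> 'p \<Rightarrow> 'm"
    and n :: nat
  assumes "k_algebra smP mulP oneP"
    and "k_algebra smQ mulQ oneQ"
    and "alg_hom smQ mulQ oneQ smP mulP oneP phi"
    and "k_bimodule smP mulP oneP smM lP rP"
  shows "hochschild_iso
           (cyl_smul smP smQ) (cyl_mul phi mulP mulQ) smM (cyl_lact phi lP) (cyl_ract phi rP)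
           smP mulP smM lP rP n"
proof -
  interpret hochschild_retraction "cyl_smul smP smQ" "cyl_mul phi mulP mulQ" "cyl_lact phi lP"
      "cyl_ract phi rP" smP mulP lP rP "cyl_proj phi" cyl_incl "cyl_incl oneP"
    using assms by (rule cylinder_hochschild_retraction)
  show ?thesis by (rule hochschild_iso)
qed

end
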